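(* Let $k\ge3$ and let $\{S_n\}$ be a perturbed sequence of weak shifts of degree $d$ corresponding to a uniformly bounded sequence of weak shift-like maps of degree $\tilde d\le d-2$. Let $G_n(z)=d^{-n}\log^+\|S(n)(z)\|_{\sup}$. Then $\{G_n\}$ converges uniformly on compact subsets of $U^+$ to a continuous, non-constant, pluriharmonic function $\tilde G$ on $U^+$.
   Context: Let $Q_m(z)=z^m$ and $\mathbf H_d(w_1,\dots,w_{k-1})=\sum_{i=1}^{k-1}w_i^d$. A uniformly bounded sequence of weak shift-like maps of degree $\tilde d\ge1$ is a sequence $\mathsf S_n(z)=(z_2,\dots,z_k,a_nz_1+p_n(z_2,\dots,z_k))$ with $\deg(a_nz_1+p_n)=\tilde d$, $p_n=\sum_{i}\alpha_{i,n}\mathbf z^i$ (multi-indices of total degree $\le\tilde d$), and constants $\tilde m,\tilde M>0$ with $\tilde m<|a_n|<\tilde M$, $|\alpha_{i,n}|<\tilde M$ for all $n,i$. The associated perturbed sequence of weak shifts of degree $d\ge\tilde d+2$ is $S_n(z)=\mathsf S_n(z)+(0,\dots,0,Q_{d-1}(z_2),\mathbf H_d(z_2,\dots,z_k))$. $S(n)=S_n\circ\cdots\circ S_1$. $\|\cdot\|_{\sup}$ is the sup-norm on $\mathbb{C}^k$ and $\log^+=\max\{\log,0\}$. $U^+=\{z\in\mathbb{C}^k:\overline{S(n)}([z:1])\to[0:\cdots:0:1:0]\}$, where $\overline{S(n)}$ is the extension to $\mathbb{P}^k$ and the limit point has the $k$-th homogeneous coordinate equal to 1 and all others 0. *)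

theory Defs
  imports "HOL-Analysis.Analysis"
begin

text \<open>Points of C^k are vectors of type complex^'n with k = CARD('n).
  Coordinates are labelled 1..k through a fixed bijection idx.\<close>

definition idx :: "nat \<Rightarrow> 'n::finite" where
  "idx = (SOME f. bij_betw f {1..CARD('n)} (UNIV::'n set))"

definition pos :: "'n::finite \<Rightarrow> nat" where
  "pos = inv_into {1..CARD('n)} idx"

definition coord :: "complex^'n::finite \<Rightarrow> nat \<Rightarrow> complex" where
  "coord z j = z $ idx j"

definition mkvec :: "(nat \<Rightarrow> complex) \<Rightarrow> complex^'n::finite" where
  "mkvec f = (\<chi> i. f (pos i))"

definition multi_indices :: "nat \<Rightarrow> nat \<Rightarrow> (nat \<Rightarrow> nat) set" where
  "multi_indices k dt = {m. (\<forall>j. j \<notin> {2..k} \<longrightarrow> m j = 0) \<and> (\<Sum>j=2..k. m j) \<le> dt}"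

definition poly_p :: "nat \<Rightarrow> ((nat \<Rightarrow> nat) \<Rightarrow> complex) \<Rightarrow> complex^'n::finite \<Rightarrow> complex" where
  "poly_p dt \<alpha> z = (\<Sum>m\<in>multi_indices CARD('n) dt. \<alpha> m * (\<Prod>j=2..CARD('n). coord z j ^ m j))"

text \<open>Uniformly bounded sequence of weak shift-like maps of degree dt (indices n \<ge> 1),
  given by a_n and the coefficients alpha_{i,n} of p_n.  The degree condition
  deg(a_n z_1 + p_n) = dt (with a_n \<noteq> 0) is: dt = 1, or some monomial of total degree dt
  has nonzero coefficient.\<close>
definition weak_shift_like_seq ::
  "nat \<Rightarrow> nat \<Rightarrow> (nat \<Rightarrow> complex) \<Rightarrow> (nat \<Rightarrow> (nat \<Rightarrow> nat) \<Rightarrow> complex) \<Rightarrow> real \<Rightarrow> real \<Rightarrow> bool" where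
  "weak_shift_like_seq k dt a \<alpha> mt Mt \<longleftrightarrow>
     dt \<ge> 1 \<and> mt > 0 \<and> Mt > 0 \<and>
     (\<forall>n\<ge>1. mt < norm (a n) \<and> norm (a n) < Mt) \<and>
     (\<forall>n\<ge>1. \<forall>m\<in>multi_indices k dt. norm (\<alpha> n m) < Mt) \<and>
     (\<forall>n\<ge>1. dt = 1 \<or> (\<exists>m\<in>multi_indices k dt. (\<Sum>j=2..k. m j) = dt \<and> \<alpha> n m \<noteq> 0))"

text \<open>The perturbed weak shift S_n = shift-like map + (0,..,0,z_2^(d-1), sum_{j=2..k} z_j^d).\<close>
definition pert_shift ::
  "nat \<Rightarrow> complex \<Rightarrow> ((nat \<Rightarrow> nat) \<Rightarrow> complex) \<Rightarrow> nat \<Rightarrow> complex^'n::finite \<Rightarrow> complex^'n" where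
  "pert_shift dt a \<alpha> d z = mkvec (\<lambda>j.
      if j \<le> CARD('n) - 2 then coord z (j + 1)
      else if j = CARD('n) - 1 then coord z CARD('n) + coord z 2 ^ (d - 1)
      else a * coord z 1 + poly_p dt \<alpha> z + (\<Sum>i=2..CARD('n). coord z i ^ d))"

fun Scomp :: "(nat \<Rightarrow> 'a \<Rightarrow> 'a) \<Rightarrow> nat \<Rightarrow> 'a \<Rightarrow> 'a" where
  "Scomp S 0 = id"
| "Scomp S (Suc n) = S (Suc n) \<circ> Scomp S n"

definition supnorm :: "complex^'n::finite \<Rightarrow> real" where
  "supnorm z = Max (range (\<lambda>i. norm (z $ i)))"

definition log_plus :: "real \<Rightarrow> real" where
  "log_plus x = max (ln x) 0"

text \<open>U^+: [S(n)(z):1] converges in P^k to [0:..:0:1:0]; expressed in the standard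
  affine chart {x_k \<noteq> 0} of P^k, which is an open neighbourhood of the limit point.\<close>
definition Uplus :: "(nat \<Rightarrow> complex^'n::finite \<Rightarrow> complex^'n) \<Rightarrow> (complex^'n) set" where
  "Uplus S = {z. eventually (\<lambda>n. coord (Scomp S n z) CARD('n) \<noteq> 0) sequentially \<and>
      (\<forall>j\<in>{1..<CARD('n)}. ((\<lambda>n. coord (Scomp S n z) j / coord (Scomp S n z) CARD('n)) \<longlongrightarrow> 0) sequentially) \<and>
      ((\<lambda>n. 1 / coord (Scomp S n z) CARD('n)) \<longlongrightarrow> 0) sequentially}"

definition cscale :: "complex \<Rightarrow> complex^'n::finite \<Rightarrow> complex^'n" where
  "cscale c v = (\<chi> i. c * v $ i)"

text \<open>Pluriharmonic: U open, u real C^2 (on C^k viewed as a real space) with vanishing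
  Levi form ddbar u, i.e. D^2u(x)(v,v) + D^2u(x)(iv,iv) = 0 for all v.\<close>
definition pluriharmonic :: "(complex^'n::finite) set \<Rightarrow> (complex^'n \<Rightarrow> real) \<Rightarrow> bool" where
  "pluriharmonic U u \<longleftrightarrow> open U \<and>
     (\<exists>Du D2u. (\<forall>x\<in>U. (u has_derivative Du x) (at x)) \<and>
        (\<forall>x\<in>U. \<forall>v. ((\<lambda>y. Du y v) has_derivative (\<lambda>w. D2u x w v)) (at x)) \<and>
        (\<forall>v w. continuous_on U (\<lambda>x. D2u x w v)) \<and>
        (\<forall>x\<in>U. \<forall>v. D2u x v v + D2u x (cscale \<i> v) (cscale \<i> v) = 0))"

end

theory Submission
  imports Defs "HOL-Complex_Analysis.Complex_Analysis"
begin

text \<open>On the cone \<open>Vplus = {|w\<^sub>k| > R, |w\<^sub>j| < eps |w\<^sub>k| for j < k}\<close> the last coordinate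
  dominates: \<open>S\<^sub>n(w)\<^sub>k = w\<^sub>k\<^sup>d (1 + rel_err)\<close> with \<open>|rel_err| \<le> 3/8\<close>, and \<open>S\<^sub>n\<close> maps the cone into itself.
  Hence \<open>U\<^sup>+\<close> is the union of the open sets \<open>S(N)\<^sup>-\<^sup>1 Vplus\<close>, on which, for \<open>n \<ge> N\<close>,
  \<open>G\<^sub>n = d\<^sup>-\<^sup>n log |S(n)\<^sub>k|\<close> telescopes into \<open>d\<^sup>-\<^sup>N log |S(N)\<^sub>k|\<close> plus partial sums of a uniformly
  convergent series of real parts of \<open>d\<^sup>-\<^sup>m\<^sup>-\<^sup>1 Log (1 + rel_err)\<close>.  So the limit is locally the real
  part of a holomorphic function, hence pluriharmonic, and along the \<open>z\<^sub>k\<close>-axis it stays within \<open>1\<close> of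
  \<open>log |z\<^sub>k|\<close>, hence it is not constant.  Holomorphy of the limit rests on Weierstrass' theorem in
  several variables, obtained from the Cauchy estimate on complex lines.\<close>

lemma idx_bij: "bij_betw (idx :: nat \<Rightarrow> 'n::finite) {1..CARD('n)} UNIV"
proof -
  have "\<exists>h. bij_betw h {1..card (UNIV::'n set)} (UNIV::'n set)"
    by (rule ex_bij_betw_nat_finite_1) simp
  then show ?thesis unfolding idx_def by (rule someI_ex)
qed

lemma pos_in_range: "pos (i::'n::finite) \<in> {1..CARD('n)}"
  unfolding pos_def using idx_bij[where 'n='n]
  by (metis UNIV_I bij_betw_def inv_into_into)

lemma idx_pos [simp]: "idx (pos (i::'n::finite)) = i"
  unfolding pos_def using idx_bij[where 'n='n]
  by (metis UNIV_I bij_betw_def f_inv_into_f)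

lemma pos_idx: "j \<in> {1..CARD('n::finite)} \<Longrightarrow> pos (idx j :: 'n) = j"
  unfolding pos_def using idx_bij[where 'n='n]
  by (metis bij_betw_def inv_into_f_f)

lemma coord_mkvec: "j \<in> {1..CARD('n::finite)} \<Longrightarrow> coord (mkvec f :: complex^'n) j = f j"
  unfolding coord_def mkvec_def by (simp add: pos_idx)

lemma coord_mkvec_pos_idx: "coord (mkvec f :: complex^'n::finite) j = f (pos (idx j :: 'n))"
  unfolding coord_def mkvec_def by simp

lemma vec_nth_eq_coord_pos: "(z::complex^'n::finite) $ i = coord z (pos i)"
  unfolding coord_def by simp

lemma supnorm_eq_last_coord:
  fixes z :: "complex^'n::finite"
  assumes "\<And>j. j \<in> {1..<CARD('n)} \<Longrightarrow> norm (coord z j) \<le> norm (coord z CARD('n))"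
  shows "supnorm z = norm (coord z CARD('n))"
  unfolding supnorm_def
proof (rule Max_eqI)
  fix y assume "y \<in> range (\<lambda>i. norm (z $ i))"
  then obtain i where "y = norm (z $ i)" by auto
  then show "y \<le> norm (coord z CARD('n))"
    using pos_in_range[of i] assms[of "pos i"] by (cases "pos i = CARD('n)") (auto simp: vec_nth_eq_coord_pos)
next
  show "norm (coord z CARD('n)) \<in> range (\<lambda>i. norm (z $ i))"
    unfolding coord_def by auto
qed simp

lemma coord_cscale: "coord (cscale c v) j = c * coord v j"
  unfolding coord_def cscale_def by simp

lemma norm_cscale: "norm (cscale c (v::complex^'n::finite)) = cmod c * norm v"
  unfolding cscale_def norm_vec_def
  by (simp add: norm_mult L2_set_right_distrib)

lemma cscale_of_real: "cscale (of_real r) (v::complex^'n::finite) = r *\<^sub>R v"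
  unfolding cscale_def by (simp add: vec_eq_iff) (simp add: scaleR_conv_of_real)

lemma bounded_linear_cscale: "bounded_linear (\<lambda>c. cscale c (u::complex^'n::finite))"
proof (rule bounded_linear_intro[where K="norm u"])
  fix x y show "cscale (x + y) u = cscale x u + cscale y u"
    unfolding cscale_def by (simp add: vec_eq_iff algebra_simps)
next
  fix r x show "cscale (r *\<^sub>R x) u = r *\<^sub>R cscale x u"
    unfolding cscale_def by (simp add: vec_eq_iff)
next
  fix x show "norm (cscale x u) \<le> norm x * norm u" by (simp add: norm_cscale)
qed

lemma bounded_linear_coord: "bounded_linear (\<lambda>z::complex^'n::finite. coord z j)"
  unfolding coord_def by (rule bounded_linear_vec_nth)

section \<open>Holomorphic functions of several variables\<close>

definition complex_linear :: "(complex^'n::finite \<Rightarrow> complex) \<Rightarrow> bool" where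
  "complex_linear L \<longleftrightarrow> (\<forall>c v. L (cscale c v) = c * L v)"

text \<open>Continuity of the derivative is built in because pluriharmonicity asks for
  continuous second derivatives.\<close>
definition holo :: "(complex^'n::finite) set \<Rightarrow> (complex^'n \<Rightarrow> complex) \<Rightarrow> bool" where
  "holo U f \<longleftrightarrow> open U \<and> (\<forall>x\<in>U. f differentiable (at x)) \<and>
     (\<forall>x\<in>U. complex_linear (frechet_derivative f (at x))) \<and>
     (\<forall>v. continuous_on U (\<lambda>x. frechet_derivative f (at x) v))"

lemma holoI:
  assumes "open U" "\<And>x. x \<in> U \<Longrightarrow> (f has_derivative Df x) (at x)"
    "\<And>x. x \<in> U \<Longrightarrow> complex_linear (Df x)" "\<And>v. continuous_on U (\<lambda>x. Df x v)"
  shows "holo U f"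
proof -
  have Df: "\<And>x. x \<in> U \<Longrightarrow> frechet_derivative f (at x) = Df x"
    using assms(2) frechet_derivative_at by metis
  show ?thesis unfolding holo_def
  proof (intro conjI ballI allI)
    fix v show "continuous_on U (\<lambda>x. frechet_derivative f (at x) v)"
      using assms(4)[of v] by (rule continuous_on_cong[THEN iffD1, rotated 2]) (auto simp: Df)
  qed (use assms Df in \<open>auto simp: differentiable_def\<close>)
qed

lemma holo_has_derivative: "holo U f \<Longrightarrow> x \<in> U \<Longrightarrow> (f has_derivative frechet_derivative f (at x)) (at x)"
  unfolding holo_def using frechet_derivative_works by blast

lemma holo_open: "holo U f \<Longrightarrow> open U"
  unfolding holo_def by blast

lemma holo_complex_linear: "holo U f \<Longrightarrow> x \<in> U \<Longrightarrow> complex_linear (frechet_derivative f (at x))"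
  unfolding holo_def by blast

lemma holo_continuous_on_deriv: "holo U f \<Longrightarrow> continuous_on U (\<lambda>x. frechet_derivative f (at x) v)"
  unfolding holo_def by blast

lemma holo_continuous_on: "holo U f \<Longrightarrow> continuous_on U f"
  by (meson continuous_at_imp_continuous_on has_derivative_continuous holo_has_derivative)

lemma holo_local:
  assumes "open U" "\<And>x. x \<in> U \<Longrightarrow> \<exists>V. open V \<and> x \<in> V \<and> V \<subseteq> U \<and> holo V f"
  shows "holo U f"
  unfolding holo_def
proof (intro conjI ballI allI)
  fix x assume "x \<in> U"
  then show "f differentiable (at x)" "complex_linear (frechet_derivative f (at x))"
    using assms(2) unfolding holo_def by blast+
next
  fix v
  show "continuous_on U (\<lambda>x. frechet_derivative f (at x) v)"
    unfolding continuous_on_eq_continuous_at[OF assms(1)]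
    using assms(2) continuous_on_eq_continuous_at holo_continuous_on_deriv by blast
qed (use assms in auto)

lemma holo_subset: "holo U f \<Longrightarrow> open V \<Longrightarrow> V \<subseteq> U \<Longrightarrow> holo V f"
  unfolding holo_def by (auto intro: continuous_on_subset)

lemma holo_cong:
  assumes "holo U f" "\<And>x. x \<in> U \<Longrightarrow> f x = g x"
  shows "holo U g"
proof (rule holoI)
  show U: "open U" using assms holo_open by blast
  fix x assume x: "x \<in> U"
  show "(g has_derivative frechet_derivative f (at x)) (at x)"
    by (rule has_derivative_transform_within_open[OF holo_has_derivative[OF assms(1) x] U x assms(2)])
qed (use assms holo_complex_linear holo_continuous_on_deriv in blast)+

lemma holo_const: "open U \<Longrightarrow> holo U (\<lambda>x. c)"
  by (rule holoI[where Df="\<lambda>x v. 0"]) (auto simp: complex_linear_def)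

lemma holo_coord: "open U \<Longrightarrow> holo U (\<lambda>x. coord x j)"
  by (rule holoI[where Df="\<lambda>x v. coord v j"])
     (auto simp: complex_linear_def coord_cscale intro: bounded_linear.has_derivative[OF bounded_linear_coord] has_derivative_ident)

lemma holo_If: "holo U f \<Longrightarrow> holo U g \<Longrightarrow> holo U (\<lambda>x. if P then f x else g x)"
  by (cases P) simp_all

lemma holo_add:
  assumes "holo U f" "holo U g" shows "holo U (\<lambda>x. f x + g x)"
proof (rule holoI[where Df="\<lambda>x v. frechet_derivative f (at x) v + frechet_derivative g (at x) v"])
  fix x assume "x \<in> U"
  then show "((\<lambda>x. f x + g x) has_derivative (\<lambda>v. frechet_derivative f (at x) v + frechet_derivative g (at x) v)) (at x)"
    using assms by (intro has_derivative_add holo_has_derivative)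
  show "complex_linear (\<lambda>v. frechet_derivative f (at x) v + frechet_derivative g (at x) v)"
    using holo_complex_linear[OF assms(1) \<open>x \<in> U\<close>] holo_complex_linear[OF assms(2) \<open>x \<in> U\<close>]
    unfolding complex_linear_def by (simp add: algebra_simps)
qed (use assms in \<open>auto intro: continuous_intros holo_continuous_on_deriv holo_open\<close>)

lemma holo_diff:
  assumes "holo U f" "holo U g" shows "holo U (\<lambda>x. f x - g x)"
proof (rule holoI[where Df="\<lambda>x v. frechet_derivative f (at x) v - frechet_derivative g (at x) v"])
  fix x assume "x \<in> U"
  then show "((\<lambda>x. f x - g x) has_derivative (\<lambda>v. frechet_derivative f (at x) v - frechet_derivative g (at x) v)) (at x)"
    using assms by (intro has_derivative_diff holo_has_derivative)
  show "complex_linear (\<lambda>v. frechet_derivative f (at x) v - frechet_derivative g (at x) v)"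
    using holo_complex_linear[OF assms(1) \<open>x \<in> U\<close>] holo_complex_linear[OF assms(2) \<open>x \<in> U\<close>]
    unfolding complex_linear_def by (simp add: algebra_simps)
qed (use assms in \<open>auto intro: continuous_intros holo_continuous_on_deriv holo_open\<close>)

lemma frechet_derivative_diff_holo:
  assumes "holo U f" "holo U g" "x \<in> U"
  shows "frechet_derivative (\<lambda>x. f x - g x) (at x) v = frechet_derivative f (at x) v - frechet_derivative g (at x) v"
proof -
  have "((\<lambda>x. f x - g x) has_derivative (\<lambda>v. frechet_derivative f (at x) v - frechet_derivative g (at x) v)) (at x)"
    using assms by (intro has_derivative_diff holo_has_derivative)
  from fun_cong[OF frechet_derivative_at[OF this], of v] show ?thesis by simp
qed

lemma holo_mult:
  assumes "holo U f" "holo U g" shows "holo U (\<lambda>x. f x * g x)"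
proof (rule holoI[where Df="\<lambda>x v. f x * frechet_derivative g (at x) v + frechet_derivative f (at x) v * g x"])
  fix x assume "x \<in> U"
  then show "((\<lambda>x. f x * g x) has_derivative (\<lambda>v. f x * frechet_derivative g (at x) v + frechet_derivative f (at x) v * g x)) (at x)"
    using assms by (intro has_derivative_mult holo_has_derivative)
  show "complex_linear (\<lambda>v. f x * frechet_derivative g (at x) v + frechet_derivative f (at x) v * g x)"
    using holo_complex_linear[OF assms(1) \<open>x \<in> U\<close>] holo_complex_linear[OF assms(2) \<open>x \<in> U\<close>]
    unfolding complex_linear_def by (simp add: algebra_simps)
next
  fix v show "continuous_on U (\<lambda>x. f x * frechet_derivative g (at x) v + frechet_derivative f (at x) v * g x)"
    using assms by (intro continuous_intros holo_continuous_on_deriv holo_continuous_on)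
qed (use assms holo_open in blast)

lemma holo_sum:
  assumes "open U" "\<And>i. i \<in> A \<Longrightarrow> holo U (f i)" shows "holo U (\<lambda>x. \<Sum>i\<in>A. f i x)"
  using assms(2) holo_const[OF assms(1)]
  by (induction A rule: infinite_finite_induct) (auto intro: holo_add)

lemma holo_prod:
  assumes "open U" "\<And>i. i \<in> A \<Longrightarrow> holo U (f i)" shows "holo U (\<lambda>x. \<Prod>i\<in>A. f i x)"
  using assms(2) holo_const[OF assms(1)]
  by (induction A rule: infinite_finite_induct) (auto intro: holo_mult)

lemma holo_power: "holo U f \<Longrightarrow> holo U (\<lambda>x. f x ^ n)"
  by (induction n) (auto intro: holo_const holo_open holo_mult)

lemma holo_compose_holomorphic:
  assumes f: "holo U f" and g: "g holomorphic_on V" "open V" and fV: "\<And>x. x \<in> U \<Longrightarrow> f x \<in> V"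
  shows "holo U (\<lambda>x. g (f x))"
proof (rule holoI[where Df="\<lambda>x v. deriv g (f x) * frechet_derivative f (at x) v"])
  fix x assume x: "x \<in> U"
  have "(g has_derivative (\<lambda>h. deriv g (f x) * h)) (at (f x))"
    using holomorphic_derivI[OF g fV[OF x]] by (simp add: has_field_derivative_def)
  from diff_chain_at[OF holo_has_derivative[OF f x] this]
  show "((\<lambda>x. g (f x)) has_derivative (\<lambda>v. deriv g (f x) * frechet_derivative f (at x) v)) (at x)"
    by (simp add: o_def)
  show "complex_linear (\<lambda>v. deriv g (f x) * frechet_derivative f (at x) v)"
    using holo_complex_linear[OF f x] by (auto simp: complex_linear_def algebra_simps)
next
  fix v
  have "continuous_on V (deriv g)"
    using g holomorphic_deriv holomorphic_on_imp_continuous_on by blast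
  then have "continuous_on U (\<lambda>x. deriv g (f x))"
    using continuous_on_compose2[OF _ holo_continuous_on[OF f]] fV by blast
  then show "continuous_on U (\<lambda>x. deriv g (f x) * frechet_derivative f (at x) v)"
    using f by (intro continuous_intros holo_continuous_on_deriv)
qed (use f holo_open in blast)

lemma Ln_holomorphic_on_ball_1_1: "Ln holomorphic_on ball 1 1"
proof (rule holomorphic_on_Ln, rule equals0I)
  fix z :: complex assume "z \<in> ball 1 1 \<inter> \<real>\<^sub>\<le>\<^sub>0"
  then have "norm (1 - z) < 1" "Re z \<le> 0" by (auto simp: dist_norm complex_nonpos_Reals_iff)
  with abs_Re_le_cmod[of "1 - z"] show False by simp
qed

lemma holo_Ln:
  assumes "holo U f" "\<And>x. x \<in> U \<Longrightarrow> dist 1 (f x) < 1"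
  shows "holo U (\<lambda>x. Ln (f x))"
  by (rule holo_compose_holomorphic[OF assms(1) Ln_holomorphic_on_ball_1_1]) (use assms in auto)

lemma holo_inverse:
  assumes "holo U f" "\<And>x. x \<in> U \<Longrightarrow> f x \<noteq> 0"
  shows "holo U (\<lambda>x. inverse (f x))"
proof (rule holo_compose_holomorphic[OF assms(1), of inverse "- {0}"])
  show "inverse holomorphic_on (- {0 :: complex})"
    using holomorphic_on_inverse[OF holomorphic_on_id[of "- {0 :: complex}"]] by (simp add: id_def)
qed (use assms in auto)

lemma holo_translate:
  assumes f: "holo U f" and V: "open V" and VU: "\<And>y. y \<in> V \<Longrightarrow> y + c \<in> U"
  shows "holo V (\<lambda>y. f (y + c))"
proof (rule holoI[where Df="\<lambda>y. frechet_derivative f (at (y + c))"])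
  fix y assume y: "y \<in> V"
  show "((\<lambda>y. f (y + c)) has_derivative frechet_derivative f (at (y + c))) (at y)"
    using diff_chain_at[OF has_derivative_add_const[OF has_derivative_ident] holo_has_derivative[OF f VU[OF y]]]
    by (simp add: o_def)
  show "complex_linear (frechet_derivative f (at (y + c)))"
    using holo_complex_linear[OF f VU[OF y]] .
next
  fix v
  have "continuous_on V (\<lambda>y. y + c)" by (intro continuous_intros)
  moreover have "(\<lambda>y. y + c) ` V \<subseteq> U" using VU by auto
  ultimately show "continuous_on V (\<lambda>y. frechet_derivative f (at (y + c)) v)"
    using continuous_on_compose2[OF holo_continuous_on_deriv[OF f]] by blast
qed (rule V)

lemma uniform_limit_sequentially_offset:
  "uniform_limit X (\<lambda>n. f (n + k)) l sequentially \<longleftrightarrow> uniform_limit X f l sequentially"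
  unfolding uniform_limit_iff
  using eventually_sequentially_seg[of "\<lambda>n. \<forall>x\<in>X. dist (f n x) (l x) < _" k] by simp

lemma holo_has_field_derivative_on_line:
  assumes h: "holo U h" and z: "y + cscale t u \<in> U"
  shows "((\<lambda>t. h (y + cscale t u)) has_field_derivative frechet_derivative h (at (y + cscale t u)) u) (at t)"
proof -
  have "((\<lambda>t. y + cscale t u) has_derivative (\<lambda>s. cscale s u)) (at t)"
    using has_derivative_add[OF has_derivative_const[of y] bounded_linear_imp_has_derivative[OF bounded_linear_cscale[of u]]]
    by simp
  from diff_chain_at[OF this holo_has_derivative[OF h z]]
  have "((\<lambda>t. h (y + cscale t u)) has_derivative (\<lambda>s. frechet_derivative h (at (y + cscale t u)) (cscale s u))) (at t)"
    by (simp add: o_def)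
  moreover have "(\<lambda>s. frechet_derivative h (at (y + cscale t u)) (cscale s u)) =
      (*) (frechet_derivative h (at (y + cscale t u)) u)"
    using holo_complex_linear[OF h z] by (auto simp: complex_linear_def fun_eq_iff mult.commute)
  ultimately show ?thesis by (simp add: has_field_derivative_def)
qed

text \<open>Reduced to the one-variable Cauchy inequality on the complex line through \<open>y\<close> in direction \<open>v\<close>.\<close>
lemma holo_deriv_Cauchy_estimate:
  assumes h: "holo U h" and r: "0 < r" and sub: "cball y r \<subseteq> U"
    and B: "\<And>z. z \<in> cball y r \<Longrightarrow> norm (h z) \<le> B"
  shows "norm (frechet_derivative h (at y) v) \<le> B * norm v / r"
proof (cases "v = 0")
  case True
  have "y \<in> U" using sub r by auto
  from has_derivative_linear[OF holo_has_derivative[OF h this]] show ?thesis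
    using True linear_0 by fastforce
next
  case False
  define u where "u = (1 / norm v) *\<^sub>R v"
  have line_in_cball: "y + cscale t u \<in> cball y r" if "cmod t \<le> r" for t
    using that False by (simp add: dist_norm norm_cscale u_def)
  define \<phi> where "\<phi> t = h (y + cscale t u)" for t
  have \<phi>_deriv: "(\<phi> has_field_derivative frechet_derivative h (at (y + cscale t u)) u) (at t)"
    if "cmod t < r" for t
    unfolding \<phi>_def using line_in_cball[of t] that sub by (intro holo_has_field_derivative_on_line[OF h]) auto
  have "\<phi> holomorphic_on ball 0 r"
    unfolding holomorphic_on_def field_differentiable_def
    using \<phi>_deriv by (metis dist_0_norm has_field_derivative_at_within mem_ball)
  moreover have "continuous_on (cball 0 r) \<phi>"
  proof -
    have "continuous_on (cball 0 r) (\<lambda>t. y + cscale t u)"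
      by (intro continuous_intros linear_continuous_on bounded_linear_cscale)
    moreover have "(\<lambda>t. y + cscale t u) ` cball 0 r \<subseteq> U" using line_in_cball sub by auto
    ultimately show ?thesis
      unfolding \<phi>_def using continuous_on_compose2[OF holo_continuous_on[OF h]] by blast
  qed
  ultimately have "norm ((deriv ^^ 1) \<phi> 0) \<le> fact 1 * B / r ^ 1"
    using r by (rule Cauchy_inequality) (use line_in_cball B in \<open>auto simp: \<phi>_def\<close>)
  moreover have "deriv \<phi> 0 = frechet_derivative h (at y) u"
  proof -
    have "cscale 0 u = 0" by (simp add: cscale_def vec_eq_iff)
    then show ?thesis using DERIV_imp_deriv[OF \<phi>_deriv[of 0]] r by simp
  qed
  ultimately have bound_u: "norm (frechet_derivative h (at y) u) \<le> B / r" by simp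
  have "y \<in> U" using sub r by auto
  have "v = cscale (of_real (norm v)) u" using False by (simp add: cscale_of_real u_def)
  then have "frechet_derivative h (at y) v = of_real (norm v) * frechet_derivative h (at y) u"
    using holo_complex_linear[OF h \<open>y \<in> U\<close>] unfolding complex_linear_def by metis
  then show ?thesis using bound_u
    by (simp add: norm_mult) (metis mult.commute mult_left_mono norm_ge_zero times_divide_eq_right)
qed

lemma divide_norm_add_one_mult_norm_less:
  assumes "e > 0"
  shows "e / (norm w + 1) * norm w < e"
proof -
  have "norm w / (norm w + 1) < 1"
    by (simp add: divide_less_eq add_nonneg_pos)
  then have "e * (norm w / (norm w + 1)) < e * 1"
    using assms by (rule mult_strict_left_mono)
  then show ?thesis by simp
qed

lemma uniformly_Cauchy_linear_maps_converge:
  fixes F :: "nat \<Rightarrow> 'a \<Rightarrow> 'b::real_normed_vector \<Rightarrow> 'c::banach"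
  assumes Cauchy: "\<And>e. e > 0 \<Longrightarrow> \<exists>N. \<forall>m\<ge>N. \<forall>n\<ge>N. \<forall>y\<in>V. \<forall>v. norm (F m y v - F n y v) \<le> e * norm v"
  shows "\<And>y. y \<in> V \<Longrightarrow> (\<lambda>j. F j y v) \<longlonglongrightarrow> lim (\<lambda>j. F j y v)"
    and "\<And>e. e > 0 \<Longrightarrow> \<exists>N. \<forall>n\<ge>N. \<forall>y\<in>V. \<forall>v. norm (F n y v - lim (\<lambda>j. F j y v)) \<le> e * norm v"
    and "uniform_limit V (\<lambda>j y. F j y v) (\<lambda>y. lim (\<lambda>j. F j y v)) sequentially"
proof -
  have pos: "e / (norm w + 1) > 0" if "e > 0" for e and w :: 'b
    using that by (intro divide_pos_pos add_nonneg_pos) auto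
  note small = divide_norm_add_one_mult_norm_less
  have conv: "(\<lambda>j. F j y w) \<longlonglongrightarrow> lim (\<lambda>j. F j y w)" if "y \<in> V" for y w
  proof -
    have "Cauchy (\<lambda>j. F j y w)"
    proof (rule CauchyI)
      fix e :: real assume "e > 0"
      then obtain N where N: "\<And>m n. m \<ge> N \<Longrightarrow> n \<ge> N \<Longrightarrow> norm (F m y w - F n y w) \<le> e / (norm w + 1) * norm w"
        using Cauchy[OF pos] \<open>y \<in> V\<close> by blast
      show "\<exists>M. \<forall>m\<ge>M. \<forall>n\<ge>M. norm (F m y w - F n y w) < e"
        using order.strict_trans1[OF N small[OF \<open>e > 0\<close>]] by blast
    qed
    then show ?thesis by (simp add: Cauchy_convergent_iff convergent_LIMSEQ_iff)
  qed
  then show "\<And>y. y \<in> V \<Longrightarrow> (\<lambda>j. F j y v) \<longlonglongrightarrow> lim (\<lambda>j. F j y v)" .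
  show unif: "\<exists>N. \<forall>n\<ge>N. \<forall>y\<in>V. \<forall>v. norm (F n y v - lim (\<lambda>j. F j y v)) \<le> e * norm v"
    if "e > 0" for e
  proof -
    obtain N where N: "\<And>m n y w. m \<ge> N \<Longrightarrow> n \<ge> N \<Longrightarrow> y \<in> V \<Longrightarrow> norm (F m y w - F n y w) \<le> e * norm w"
      using Cauchy[OF \<open>e > 0\<close>] by blast
    have "norm (F n y w - lim (\<lambda>j. F j y w)) \<le> e * norm w" if "n \<ge> N" "y \<in> V" for n y w
    proof (rule Lim_norm_ubound[OF _ tendsto_diff[OF tendsto_const conv[OF \<open>y \<in> V\<close>]]])
      show "\<forall>\<^sub>F m in sequentially. norm (F n y w - F m y w) \<le> e * norm w"
        unfolding eventually_sequentially using N that by blast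
    qed simp
    then show ?thesis by blast
  qed
  show "uniform_limit V (\<lambda>j y. F j y v) (\<lambda>y. lim (\<lambda>j. F j y v)) sequentially"
  proof (rule uniform_limitI)
    fix e :: real assume "e > 0"
    obtain N where N: "\<And>n y. n \<ge> N \<Longrightarrow> y \<in> V \<Longrightarrow> norm (F n y v - lim (\<lambda>j. F j y v)) \<le> e / (norm v + 1) * norm v"
      using unif[OF pos[OF \<open>e > 0\<close>]] by blast
    show "\<forall>\<^sub>F j in sequentially. \<forall>y\<in>V. dist (F j y v) (lim (\<lambda>j. F j y v)) < e"
      unfolding eventually_sequentially dist_norm
      using order.strict_trans1[OF N small[OF \<open>e > 0\<close>]] by blast
  qed
qed

lemma holo_uniform_limit_deriv_Cauchy:
  assumes f: "\<And>j. holo U (f j)" and lim: "uniform_limit U f g sequentially"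
    and r: "r > 0" and V: "\<And>y. y \<in> V \<Longrightarrow> cball y r \<subseteq> U" and e: "e > 0"
  shows "\<exists>N. \<forall>m\<ge>N. \<forall>n\<ge>N. \<forall>y\<in>V. \<forall>v.
           norm (frechet_derivative (f m) (at y) v - frechet_derivative (f n) (at y) v) \<le> e * norm v"
proof -
  from uniform_limitD[OF lim, of "e * r / 2"] e r
  obtain N where N: "\<And>n x. n \<ge> N \<Longrightarrow> x \<in> U \<Longrightarrow> dist (f n x) (g x) < e * r / 2"
    unfolding eventually_sequentially by auto
  have "norm (frechet_derivative (f m) (at y) v - frechet_derivative (f n) (at y) v) \<le> e * norm v"
    if "m \<ge> N" "n \<ge> N" "y \<in> V" for m n y v
  proof -
    have "norm (f m z - f n z) \<le> e * r" if "z \<in> cball y r" for z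
    proof -
      have "z \<in> U" using V \<open>y \<in> V\<close> that by blast
      then show ?thesis
        using N[of m z] N[of n z] \<open>m \<ge> N\<close> \<open>n \<ge> N\<close> norm_triangle_ineq4[of "f m z - g z" "f n z - g z"]
        by (simp add: dist_norm)
    qed
    from holo_deriv_Cauchy_estimate[OF holo_diff[OF f f] r V[OF \<open>y \<in> V\<close>] this]
    moreover have "y \<in> U" using V[OF \<open>y \<in> V\<close>] r by auto
    ultimately show ?thesis
      using frechet_derivative_diff_holo[OF f f] r by auto
  qed
  then show ?thesis by blast
qed

lemma has_derivative_sequence_open:
  fixes f :: "nat \<Rightarrow> 'a::real_normed_vector \<Rightarrow> 'b::banach"
  assumes V: "open V" "convex V"
    and der: "\<And>n x. x \<in> V \<Longrightarrow> (f n has_derivative F n x) (at x)"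
    and unif: "\<And>e. e > 0 \<Longrightarrow> \<exists>N. \<forall>n\<ge>N. \<forall>x\<in>V. \<forall>h. norm (F n x h - Df x h) \<le> e * norm h"
    and lim: "\<And>x. x \<in> V \<Longrightarrow> (\<lambda>n. f n x) \<longlonglongrightarrow> g x"
    and y: "y \<in> V"
  shows "(g has_derivative Df y) (at y)"
proof -
  have "\<exists>g2. \<forall>x\<in>V. (\<lambda>n. f n x) \<longlonglongrightarrow> g2 x \<and> (g2 has_derivative Df x) (at x within V)"
    by (rule has_derivative_sequence[OF V(2) has_derivative_at_withinI[OF der] _ y lim[OF y]])
       (use unif in \<open>auto simp: eventually_sequentially\<close>)
  then obtain g2 where g2: "\<And>x. x \<in> V \<Longrightarrow> (\<lambda>n. f n x) \<longlonglongrightarrow> g2 x"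
      "\<And>x. x \<in> V \<Longrightarrow> (g2 has_derivative Df x) (at x within V)"
    by blast
  have "g2 x = g x" if "x \<in> V" for x
    using g2(1)[OF that] lim[OF that] by (rule LIMSEQ_unique)
  moreover have "(g2 has_derivative Df y) (at y)" using g2(2)[OF y] at_within_open[OF y V(1)] by simp
  ultimately show ?thesis by (rule has_derivative_transform_within_open[OF _ V(1) y, rotated])
qed

text \<open>Weierstrass' theorem: by the Cauchy estimate, the derivatives converge uniformly as well.\<close>
lemma holo_uniform_limit:
  fixes f :: "nat \<Rightarrow> complex^'n::finite \<Rightarrow> complex"
  assumes U: "open U" and f: "\<And>j. holo U (f j)" and lim: "uniform_limit U f g sequentially"
  shows "holo U g"
proof (rule holo_local[OF U])
  fix x0 assume "x0 \<in> U"
  then obtain r where r: "r > 0" "cball x0 (2 * r) \<subseteq> U"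
    using U open_contains_cball by (metis field_sum_of_halves half_gt_zero mult_2)
  define V where "V = ball x0 r"
  have cball_V: "cball y r \<subseteq> U" if "y \<in> V" for y
    using that r(2) cball_subset_cball_iff[of y r x0 "2 * r"] by (auto simp: V_def dist_commute)
  have VU: "V \<subseteq> U" using cball_V r(1) by force
  define F where "F j y = frechet_derivative (f j) (at y)" for j y
  define Df where "Df y v = lim (\<lambda>j. F j y v)" for y v
  have Cauchy: "\<And>e. e > 0 \<Longrightarrow> \<exists>N. \<forall>m\<ge>N. \<forall>n\<ge>N. \<forall>y\<in>V. \<forall>v. norm (F m y v - F n y v) \<le> e * norm v"
    unfolding F_def by (rule holo_uniform_limit_deriv_Cauchy[OF f lim r(1) cball_V])
  have Df_lim: "\<And>y v. y \<in> V \<Longrightarrow> (\<lambda>j. F j y v) \<longlonglongrightarrow> Df y v"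
    unfolding Df_def by (rule uniformly_Cauchy_linear_maps_converge(1)[OF Cauchy])
  have Df_unif: "\<And>e. e > 0 \<Longrightarrow> \<exists>N. \<forall>n\<ge>N. \<forall>y\<in>V. \<forall>v. norm (F n y v - Df y v) \<le> e * norm v"
    unfolding Df_def by (rule uniformly_Cauchy_linear_maps_converge(2)[OF Cauchy])
  have Df_uniform_limit: "\<And>v. uniform_limit V (\<lambda>j y. F j y v) (\<lambda>y. Df y v) sequentially"
    unfolding Df_def by (rule uniformly_Cauchy_linear_maps_converge(3)[OF Cauchy])
  have "(g has_derivative Df y) (at y)" if "y \<in> V" for y
  proof (rule has_derivative_sequence_open[of V f F])
    show "\<And>n x. x \<in> V \<Longrightarrow> (f n has_derivative F n x) (at x)"
      unfolding F_def using VU by (intro holo_has_derivative[OF f]) auto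
    show "\<And>x. x \<in> V \<Longrightarrow> (\<lambda>n. f n x) \<longlonglongrightarrow> g x"
      using VU by (intro tendsto_uniform_limitI[OF lim]) auto
  qed (use Df_unif that in \<open>auto simp: V_def\<close>)
  moreover have "complex_linear (Df y)" if "y \<in> V" for y
    unfolding complex_linear_def
  proof (intro allI)
    fix c v
    have "(\<lambda>j. F j y (cscale c v)) = (\<lambda>j. c * F j y v)"
      using holo_complex_linear[OF f] VU that unfolding complex_linear_def F_def by auto
    then show "Df y (cscale c v) = c * Df y v"
      using Df_lim[OF that, of "cscale c v"] tendsto_mult_left[OF Df_lim[OF that, of v], of c]
      by (metis LIMSEQ_unique)
  qed
  moreover have "continuous_on V (\<lambda>y. Df y v)" for v
    by (rule uniform_limit_theorem[OF _ Df_uniform_limit])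
       (use VU in \<open>auto simp: F_def intro!: always_eventually continuous_on_subset[OF holo_continuous_on_deriv[OF f]]\<close>)
  ultimately have "holo V g" by (intro holoI) (auto simp: V_def)
  then show "\<exists>V. open V \<and> x0 \<in> V \<and> V \<subseteq> U \<and> holo V g"
    using VU r(1) unfolding V_def by (intro exI[of _ "ball x0 r"]) auto
qed

lemma norm_increment_minus_derivative_le:
  fixes f :: "'a::real_normed_vector \<Rightarrow> 'b::real_inner"
  assumes der: "\<And>t. t \<in> {0..1} \<Longrightarrow> (f has_derivative Df (y + t *\<^sub>R h)) (at (y + t *\<^sub>R h))"
    and bound: "\<And>t. t \<in> {0..1} \<Longrightarrow> norm (Df (y + t *\<^sub>R h) h - Df y h) \<le> B"
  shows "norm (f (y + h) - f y - Df y h) \<le> B"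
proof -
  define \<phi> where "\<phi> t = f (y + t *\<^sub>R h) - t *\<^sub>R Df y h" for t
  have \<phi>_deriv: "(\<phi> has_derivative (\<lambda>\<tau>. Df (y + t *\<^sub>R h) (\<tau> *\<^sub>R h) - \<tau> *\<^sub>R Df y h)) (at t)"
    if "t \<in> {0..1}" for t
  proof -
    have "((\<lambda>t. y + t *\<^sub>R h) has_derivative (\<lambda>\<tau>. \<tau> *\<^sub>R h)) (at t)"
      by (auto intro!: derivative_eq_intros)
    from diff_chain_at[OF this der[OF that]]
    show ?thesis unfolding \<phi>_def by (auto intro!: derivative_eq_intros simp: o_def)
  qed
  have "\<exists>t\<in>{0<..<1}. norm (\<phi> 1 - \<phi> 0) \<le> norm ((\<lambda>\<tau>. Df (y + t *\<^sub>R h) (\<tau> *\<^sub>R h) - \<tau> *\<^sub>R Df y h) (1 - 0))"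
  proof (rule mvt_general)
    show "continuous_on {0..1} \<phi>"
      using \<phi>_deriv by (meson continuous_at_imp_continuous_on has_derivative_continuous)
  qed (use \<phi>_deriv in auto)
  then obtain t where "t \<in> {0<..<1}" "norm (\<phi> 1 - \<phi> 0) \<le> norm (Df (y + t *\<^sub>R h) h - Df y h)"
    by auto
  moreover have "\<phi> 1 - \<phi> 0 = f (y + h) - f y - Df y h" by (simp add: \<phi>_def)
  ultimately show ?thesis using bound[of t] by auto
qed

lemma uniform_limit_difference_quotients:
  fixes f :: "'a::euclidean_space \<Rightarrow> 'b::real_inner"
  assumes der: "\<And>x. x \<in> cball x0 (2 * r) \<Longrightarrow> (f has_derivative Df x) (at x)"
    and cont: "continuous_on (cball x0 (2 * r)) (\<lambda>x. Df x v)"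
    and s: "s \<longlonglongrightarrow> 0" and s_nz: "\<And>j. s j \<noteq> 0" and r: "r > 0"
  shows "uniform_limit (ball x0 r) (\<lambda>j y. (1 / s j) *\<^sub>R (f (y + s j *\<^sub>R v) - f y)) (\<lambda>y. Df y v) sequentially"
proof (rule uniform_limitI)
  fix e :: real assume "e > 0"
  obtain \<delta> where \<delta>: "\<delta> > 0" "\<And>x x'. x \<in> cball x0 (2 * r) \<Longrightarrow> x' \<in> cball x0 (2 * r) \<Longrightarrow>
      dist x' x < \<delta> \<Longrightarrow> dist (Df x' v) (Df x v) < e / 2"
    using compact_uniformly_continuous[OF cont compact_cball] \<open>e > 0\<close>
    unfolding uniformly_continuous_on_def by (meson half_gt_zero)
  have lin: "Df x (c *\<^sub>R w) = c *\<^sub>R Df x w" if "x \<in> cball x0 (2 * r)" for x c w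
    using has_derivative_linear[OF der[OF that]] linear_cmul by blast
  have "((\<lambda>j. norm (s j *\<^sub>R v)) \<longlongrightarrow> 0) sequentially"
    using tendsto_norm[OF tendsto_scaleR[OF s tendsto_const[of v]]] by simp
  from order_tendstoD(2)[OF this, of "min \<delta> r"]
  have "\<forall>\<^sub>F j in sequentially. norm (s j *\<^sub>R v) < min \<delta> r" using \<delta>(1) r by simp
  then show "\<forall>\<^sub>F j in sequentially. \<forall>y\<in>ball x0 r. dist ((1 / s j) *\<^sub>R (f (y + s j *\<^sub>R v) - f y)) (Df y v) < e"
  proof eventually_elim
    case (elim j)
    show ?case
    proof
      fix y assume y: "y \<in> ball x0 r"
      define h where "h = s j *\<^sub>R v"
      have segment: "y + t *\<^sub>R h \<in> cball x0 (2 * r)" "dist (y + t *\<^sub>R h) y < \<delta>" if "t \<in> {0..1}" for t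
      proof -
        have "norm (t *\<^sub>R h) \<le> norm h" using that by (simp add: mult_left_le_one_le)
        then have "norm (t *\<^sub>R h) < min \<delta> r" using elim by (simp add: h_def)
        moreover have "norm (x0 - (y + t *\<^sub>R h)) \<le> norm (x0 - y) + norm (t *\<^sub>R h)"
          using norm_triangle_ineq4[of "x0 - y" "t *\<^sub>R h"] by (simp add: algebra_simps)
        ultimately show "y + t *\<^sub>R h \<in> cball x0 (2 * r)" "dist (y + t *\<^sub>R h) y < \<delta>"
          using y by (auto simp: dist_norm)
      qed
      have y_in: "y \<in> cball x0 (2 * r)" using segment(1)[of 0] by simp
      have "norm (f (y + h) - f y - Df y h) \<le> \<bar>s j\<bar> * (e / 2)"
      proof (rule norm_increment_minus_derivative_le)
        fix t :: real assume t: "t \<in> {0..1}"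
        show "(f has_derivative Df (y + t *\<^sub>R h)) (at (y + t *\<^sub>R h))" by (rule der[OF segment(1)[OF t]])
        have "norm (Df (y + t *\<^sub>R h) h - Df y h) = \<bar>s j\<bar> * dist (Df (y + t *\<^sub>R h) v) (Df y v)"
          using lin[OF segment(1)[OF t]] lin[OF y_in] by (simp add: h_def dist_norm flip: scaleR_diff_right)
        also have "\<dots> \<le> \<bar>s j\<bar> * (e / 2)"
          using \<delta>(2)[OF y_in segment[OF t]] by (intro mult_left_mono) auto
        finally show "norm (Df (y + t *\<^sub>R h) h - Df y h) \<le> \<bar>s j\<bar> * (e / 2)" .
      qed
      moreover have "(1 / s j) *\<^sub>R (f (y + s j *\<^sub>R v) - f y) - Df y v = (1 / s j) *\<^sub>R (f (y + h) - f y - Df y h)"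
        using s_nz[of j] lin[OF y_in] by (simp add: h_def algebra_simps)
      ultimately have "dist ((1 / s j) *\<^sub>R (f (y + s j *\<^sub>R v) - f y)) (Df y v) \<le> e / 2"
        using s_nz[of j] by (simp add: dist_norm divide_le_eq mult.commute)
      then show "dist ((1 / s j) *\<^sub>R (f (y + s j *\<^sub>R v) - f y)) (Df y v) < e"
        using \<open>e > 0\<close> by linarith
    qed
  qed
qed

text \<open>The difference quotients of a holomorphic function are holomorphic and converge locally
  uniformly to the directional derivative.\<close>
lemma holo_deriv:
  assumes f: "holo U f"
  shows "holo U (\<lambda>x. frechet_derivative f (at x) v)"
proof (rule holo_local)
  show U: "open U" using f holo_open by blast
  fix x0 assume "x0 \<in> U"
  then obtain r where r: "r > 0" "cball x0 (2 * r) \<subseteq> U"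
    using U open_contains_cball by (metis field_sum_of_halves half_gt_zero mult_2)
  define s where "s j = r / (norm v + 1) * inverse (real (Suc j))" for j
  have s_pos: "s j > 0" for j
    unfolding s_def using r(1) by (intro mult_pos_pos divide_pos_pos add_nonneg_pos) auto
  have step_small: "norm (s j *\<^sub>R v) \<le> r" for j
  proof -
    have "norm (s j *\<^sub>R v) \<le> r / (norm v + 1) * norm v"
      using s_pos[of j] r(1) by (simp add: s_def field_simps add_pos_nonneg)
    also have "\<dots> \<le> r" using r(1) by (simp add: field_simps add_pos_nonneg)
    finally show ?thesis .
  qed
  have step_in_U: "y + s j *\<^sub>R v \<in> U" if "y \<in> ball x0 r" for y j
  proof -
    have "dist x0 (y + s j *\<^sub>R v) \<le> dist x0 y + norm (s j *\<^sub>R v)"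
      using dist_triangle[of x0 "y + s j *\<^sub>R v" y] by (simp add: dist_norm)
    then show ?thesis using that step_small[of j] r(2) by auto
  qed
  have "holo (ball x0 r) (\<lambda>y. (1 / s j) *\<^sub>R (f (y + s j *\<^sub>R v) - f y))" for j
  proof -
    have "holo (ball x0 r) (\<lambda>y. of_real (1 / s j) * (f (y + s j *\<^sub>R v) - f y))"
      by (intro holo_mult holo_diff holo_const holo_translate[OF f] holo_subset[OF f])
         (use step_in_U r in \<open>auto simp: subset_iff\<close>)
    then show ?thesis by (rule holo_cong) (simp add: scaleR_conv_of_real)
  qed
  moreover have "uniform_limit (ball x0 r) (\<lambda>j y. (1 / s j) *\<^sub>R (f (y + s j *\<^sub>R v) - f y))
      (\<lambda>y. frechet_derivative f (at y) v) sequentially"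
  proof (rule uniform_limit_difference_quotients[OF _ _ _ _ r(1)])
    show "s \<longlonglongrightarrow> 0"
      unfolding s_def by (rule tendsto_mult_right_zero[OF LIMSEQ_inverse_real_of_nat])
  qed (use s_pos[THEN less_imp_not_eq2] r(2) in \<open>auto intro: holo_has_derivative[OF f] continuous_on_subset[OF holo_continuous_on_deriv[OF f]]\<close>)
  ultimately have "holo (ball x0 r) (\<lambda>y. frechet_derivative f (at y) v)"
    by (rule holo_uniform_limit[OF open_ball])
  then show "\<exists>V. open V \<and> x0 \<in> V \<and> V \<subseteq> U \<and> holo V (\<lambda>x. frechet_derivative f (at x) v)"
    using r by (intro exI[of _ "ball x0 r"]) (auto simp: subset_iff)
qed

section \<open>Pluriharmonic functions\<close>

lemma has_derivative_Re_holo: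
  assumes F: "holo V F" and y: "y \<in> V" and u: "\<And>y. y \<in> V \<Longrightarrow> u y = Re (F y) + c"
  shows "(u has_derivative (\<lambda>v. Re (frechet_derivative F (at y) v))) (at y)"
proof -
  have "((\<lambda>x. Re (F x) + c) has_derivative (\<lambda>v. Re (frechet_derivative F (at y) v))) (at y)"
    by (rule has_derivative_add_const[OF bounded_linear.has_derivative[OF bounded_linear_Re holo_has_derivative[OF F y]]])
  then show ?thesis
    by (rule has_derivative_transform_within_open[OF _ holo_open[OF F] y]) (simp add: u)
qed

text \<open>Both slots of the second derivative are complex linear, so the factor is \<open>\<i>\<^sup>2 = -1\<close>.\<close>
lemma holo_second_derivative_cscale_ii:
  assumes F: "holo V F" and x: "x \<in> V"
  shows "frechet_derivative (\<lambda>y. frechet_derivative F (at y) (cscale \<i> v)) (at x) (cscale \<i> v)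
       = - frechet_derivative (\<lambda>y. frechet_derivative F (at y) v) (at x) v"
proof -
  define \<psi> where "\<psi> y = frechet_derivative F (at y) v" for y
  have \<psi>: "holo V \<psi>" unfolding \<psi>_def by (rule holo_deriv[OF F])
  have "((\<lambda>y. \<i> * \<psi> y) has_derivative (\<lambda>w. \<i> * frechet_derivative \<psi> (at x) w)) (at x)"
    by (rule bounded_linear.has_derivative[OF bounded_linear_mult_right holo_has_derivative[OF \<psi> x]])
  moreover have "\<i> * \<psi> y = frechet_derivative F (at y) (cscale \<i> v)" if "y \<in> V" for y
    using holo_complex_linear[OF F that] unfolding complex_linear_def \<psi>_def by simp
  ultimately have "((\<lambda>y. frechet_derivative F (at y) (cscale \<i> v)) has_derivative
      (\<lambda>w. \<i> * frechet_derivative \<psi> (at x) w)) (at x)"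
    by (rule has_derivative_transform_within_open[OF _ holo_open[OF F] x])
  then have "frechet_derivative (\<lambda>y. frechet_derivative F (at y) (cscale \<i> v)) (at x) (cscale \<i> v)
      = \<i> * frechet_derivative \<psi> (at x) (cscale \<i> v)"
    using frechet_derivative_at by metis
  also have "\<dots> = - frechet_derivative \<psi> (at x) v"
    using holo_complex_linear[OF \<psi> x] unfolding complex_linear_def by (simp add: mult.assoc[symmetric])
  finally show ?thesis unfolding \<psi>_def .
qed

lemma Re_holo_derivatives:
  assumes F: "holo V F" and u: "\<And>y. y \<in> V \<Longrightarrow> u y = Re (F y) + c" and y: "y \<in> V"
  shows "(u has_derivative frechet_derivative u (at y)) (at y)"
    and "((\<lambda>y. frechet_derivative u (at y) v) has_derivative
          frechet_derivative (\<lambda>y. frechet_derivative u (at y) v) (at y)) (at y)"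
    and "frechet_derivative (\<lambda>y. frechet_derivative u (at y) v) (at y) w
          = Re (frechet_derivative (\<lambda>y. frechet_derivative F (at y) v) (at y) w)"
proof -
  have Du: "frechet_derivative u (at y) = (\<lambda>v. Re (frechet_derivative F (at y) v))" if "y \<in> V" for y
    by (rule frechet_derivative_at[OF has_derivative_Re_holo[OF F that u], symmetric])
  show "(u has_derivative frechet_derivative u (at y)) (at y)"
    using has_derivative_Re_holo[OF F y u] by (simp only: Du[OF y])
  have D2u: "((\<lambda>y. frechet_derivative u (at y) v) has_derivative
      (\<lambda>w. Re (frechet_derivative (\<lambda>y. frechet_derivative F (at y) v) (at y) w))) (at y)"
    by (rule has_derivative_Re_holo[OF holo_deriv[OF F] y, where c=0]) (simp add: Du)
  note D2u_eq = frechet_derivative_at[OF D2u]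
  from D2u show "((\<lambda>y. frechet_derivative u (at y) v) has_derivative
      frechet_derivative (\<lambda>y. frechet_derivative u (at y) v) (at y)) (at y)"
    by (simp only: D2u_eq)
  show "frechet_derivative (\<lambda>y. frechet_derivative u (at y) v) (at y) w
      = Re (frechet_derivative (\<lambda>y. frechet_derivative F (at y) v) (at y) w)"
    by (simp only: D2u_eq[symmetric])
qed

lemma pluriharmonic_if_locally_Re_holo:
  fixes u :: "complex^'n::finite \<Rightarrow> real"
  assumes U: "open U"
    and loc: "\<And>x. x \<in> U \<Longrightarrow> \<exists>V F c. open V \<and> x \<in> V \<and> holo V F \<and> (\<forall>y\<in>V. u y = Re (F y) + c)"
  shows "pluriharmonic U u"
  unfolding pluriharmonic_def
proof (intro conjI U exI[of _ "\<lambda>x. frechet_derivative u (at x)"]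
    exI[of _ "\<lambda>x w v. frechet_derivative (\<lambda>y. frechet_derivative u (at y) v) (at x) w"] ballI allI)
  fix x v assume "x \<in> U"
  from loc[OF this] obtain V F c where V: "x \<in> V" "holo V F" and u: "\<And>y. y \<in> V \<Longrightarrow> u y = Re (F y) + c"
    by auto
  show "(u has_derivative frechet_derivative u (at x)) (at x)"
    by (rule Re_holo_derivatives(1)[OF V(2) u V(1)])
  show "((\<lambda>y. frechet_derivative u (at y) v) has_derivative
      (\<lambda>w. frechet_derivative (\<lambda>y. frechet_derivative u (at y) v) (at x) w)) (at x)"
    using Re_holo_derivatives(2)[OF V(2) u V(1)] by simp
  show "frechet_derivative (\<lambda>y. frechet_derivative u (at y) v) (at x) v +
      frechet_derivative (\<lambda>y. frechet_derivative u (at y) (cscale \<i> v)) (at x) (cscale \<i> v) = 0"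
    using Re_holo_derivatives(3)[OF V(2) u V(1), of v v]
      Re_holo_derivatives(3)[OF V(2) u V(1), of "cscale \<i> v" "cscale \<i> v"]
      holo_second_derivative_cscale_ii[OF V(2,1), of v]
    by simp
next
  fix v w
  show "continuous_on U (\<lambda>x. frechet_derivative (\<lambda>y. frechet_derivative u (at y) v) (at x) w)"
    unfolding continuous_on_eq_continuous_at[OF U]
  proof
    fix x assume "x \<in> U"
    from loc[OF this] obtain V F c where V: "open V" "x \<in> V" "holo V F" and u: "\<And>y. y \<in> V \<Longrightarrow> u y = Re (F y) + c"
      by auto
    have "continuous_on V (\<lambda>y. Re (frechet_derivative (\<lambda>y. frechet_derivative F (at y) v) (at y) w))"
      by (intro continuous_intros holo_continuous_on_deriv holo_deriv V(3))
    then have "continuous_on V (\<lambda>y. frechet_derivative (\<lambda>y. frechet_derivative u (at y) v) (at y) w)"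
      by (rule continuous_on_cong[THEN iffD1, rotated 2]) (simp_all add: Re_holo_derivatives(3)[OF V(3) u])
    then show "isCont (\<lambda>x. frechet_derivative (\<lambda>y. frechet_derivative u (at y) v) (at x) w) x"
      using continuous_on_eq_continuous_at[OF V(1)] V(2) by blast
  qed
qed

lemma pluriharmonic_imp_continuous_on: "pluriharmonic U u \<Longrightarrow> continuous_on U u"
  unfolding pluriharmonic_def by (meson continuous_at_imp_continuous_on has_derivative_continuous)

section \<open>The perturbed weak shifts near infinity\<close>

lemma norm_poly_p_le:
  fixes w :: "complex^'n::finite" and M t :: real
  assumes \<alpha>: "\<And>m. m \<in> multi_indices CARD('n) dt \<Longrightarrow> norm (\<alpha> m) \<le> M"
    and t: "1 \<le> t" and w: "\<And>j. j \<in> {2..CARD('n)} \<Longrightarrow> norm (coord w j) \<le> t"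
  shows "norm (poly_p dt \<alpha> w) \<le> card (multi_indices CARD('n) dt) * M * t ^ dt"
proof -
  have "norm (\<alpha> m * (\<Prod>j=2..CARD('n). coord w j ^ m j)) \<le> M * t ^ dt"
    if m: "m \<in> multi_indices CARD('n) dt" for m
  proof -
    have "norm (\<Prod>j=2..CARD('n). coord w j ^ m j) = (\<Prod>j=2..CARD('n). norm (coord w j) ^ m j)"
      by (simp add: prod_norm[symmetric] norm_power)
    also have "\<dots> \<le> (\<Prod>j=2..CARD('n). t ^ m j)"
      by (intro prod_mono conjI power_mono w) auto
    also have "\<dots> = t ^ (\<Sum>j=2..CARD('n). m j)" by (simp add: power_sum)
    also have "\<dots> \<le> t ^ dt"
      using m t unfolding multi_indices_def by (intro power_increasing) auto
    finally have "norm (\<Prod>j=2..CARD('n). coord w j ^ m j) \<le> t ^ dt" .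
    moreover have "0 \<le> M" using \<alpha>[OF m] norm_ge_zero order_trans by blast
    ultimately show ?thesis
      using mult_mono[OF \<alpha>[OF m]] by (simp add: norm_mult)
  qed
  then have "norm (poly_p dt \<alpha> w) \<le> (\<Sum>m\<in>multi_indices CARD('n) dt. M * t ^ dt)"
    unfolding poly_p_def by (intro order_trans[OF norm_sum] sum_mono)
  then show ?thesis by (simp add: mult.assoc)
qed

locale perturbed_weak_shift =
  fixes a :: "nat \<Rightarrow> complex" and \<alpha> :: "nat \<Rightarrow> (nat \<Rightarrow> nat) \<Rightarrow> complex"
    and dt d :: nat and mt Mt :: real
    and S :: "nat \<Rightarrow> complex^'n::finite \<Rightarrow> complex^'n"
  assumes card_ge_3: "CARD('n) \<ge> 3"
    and weak_shift_like: "weak_shift_like_seq CARD('n) dt a \<alpha> mt Mt"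
    and degree_gap: "d \<ge> dt + 2"
    and S_eq: "\<And>n. S n = pert_shift dt (a n) (\<alpha> n) d"
begin

lemma Mt_pos: "Mt > 0"
  and norm_a_less: "n \<ge> 1 \<Longrightarrow> norm (a n) < Mt"
  and norm_\<alpha>_less: "n \<ge> 1 \<Longrightarrow> m \<in> multi_indices CARD('n) dt \<Longrightarrow> norm (\<alpha> n m) < Mt"
  and dt_ge_1: "dt \<ge> 1"
  using weak_shift_like unfolding weak_shift_like_seq_def by auto

lemma d_ge_3: "d \<ge> 3"
  using degree_gap dt_ge_1 by linarith

lemma power_d_eq: "(t::real) ^ d = t ^ (d - 1) * t"
  using d_ge_3 by (metis Suc_diff_1 less_le_trans numeral_3_eq_3 power_Suc2 zero_less_Suc)

lemma le_power_d_minus_1: "1 \<le> (t::real) \<Longrightarrow> t \<le> t ^ (d - 1)"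
  using d_ge_3 by (intro self_le_power) auto

lemma coord_S_shift: "j \<in> {1..CARD('n) - 2} \<Longrightarrow> coord (S n w) j = coord w (j + 1)"
  unfolding S_eq pert_shift_def by (subst coord_mkvec) auto

lemma coord_S_penultimate: "coord (S n w) (CARD('n) - 1) = coord w CARD('n) + coord w 2 ^ (d - 1)"
  unfolding S_eq pert_shift_def using card_ge_3 by (subst coord_mkvec) auto

lemma coord_S_last:
  "coord (S n w) CARD('n) = a n * coord w 1 + poly_p dt (\<alpha> n) w + (\<Sum>i=2..CARD('n). coord w i ^ d)"
  unfolding S_eq pert_shift_def using card_ge_3 by (subst coord_mkvec) auto

definition rel_err :: "nat \<Rightarrow> complex^'n \<Rightarrow> complex" where
  "rel_err n w = (a n * coord w 1 + poly_p dt (\<alpha> n) w + (\<Sum>i=2..CARD('n) - 1. coord w i ^ d)) / coord w CARD('n) ^ d"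

lemma coord_S_last_eq:
  assumes "coord w CARD('n) \<noteq> 0"
  shows "coord (S n w) CARD('n) = coord w CARD('n) ^ d * (1 + rel_err n w)"
proof -
  have "{2..CARD('n)} = insert CARD('n) {2..CARD('n) - 1}" "CARD('n) \<notin> {2..CARD('n) - 1}"
    using card_ge_3 by auto
  then show ?thesis
    unfolding coord_S_last rel_err_def using assms by (simp add: field_simps)
qed

definition Cpoly :: real where
  "Cpoly = real (card (multi_indices CARD('n) dt)) * Mt"

text \<open>The constants are chosen so that on \<open>Vplus\<close> each of the three summands of \<open>rel_err\<close> is at
  most \<open>1/8\<close> and the next iterate again lies in the cone of aperture \<open>eps\<close>.\<close>
definition eps :: real where
  "eps = 1 / (2 * real CARD('n))"

definition R :: real where
  "R = 8 * Mt + 8 * Cpoly + 8 * real CARD('n) + 8"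

definition Vplus :: "(complex^'n) set" where
  "Vplus = {w. R < norm (coord w CARD('n)) \<and>
      (\<forall>j\<in>{1..<CARD('n)}. norm (coord w j) < eps * norm (coord w CARD('n)))}"

lemma eps_pos: "eps > 0" and eps_le_half: "eps \<le> 1/2" and card_mult_eps: "real CARD('n) * eps = 1/2"
  unfolding eps_def using card_ge_3 by (auto simp: field_simps)

lemma R_ge: "R \<ge> 8 * Mt" "R \<ge> 8 * Cpoly" "R \<ge> 8 * real CARD('n) + 8" "R \<ge> 8"
  unfolding R_def Cpoly_def using Mt_pos by auto

lemma R_pos: "R > 0"
  using R_ge(4) by linarith

lemma Vplus_last_gt: "w \<in> Vplus \<Longrightarrow> R < norm (coord w CARD('n))"
  unfolding Vplus_def by blast

lemma Vplus_coord_less: "w \<in> Vplus \<Longrightarrow> j \<in> {1..<CARD('n)} \<Longrightarrow> norm (coord w j) < eps * norm (coord w CARD('n))"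
  unfolding Vplus_def by blast

lemma Vplus_last_ge_8: "w \<in> Vplus \<Longrightarrow> 8 \<le> norm (coord w CARD('n))"
  using Vplus_last_gt R_ge(4) by force

lemma Vplus_coord_le:
  assumes "w \<in> Vplus" "j \<in> {1..CARD('n)}"
  shows "norm (coord w j) \<le> norm (coord w CARD('n))"
proof (cases "j = CARD('n)")
  case False
  then have "norm (coord w j) < eps * norm (coord w CARD('n))"
    using assms by (intro Vplus_coord_less) auto
  also have "\<dots> \<le> norm (coord w CARD('n))"
    using eps_le_half eps_pos by (intro mult_left_le_one_le) auto
  finally show ?thesis by simp
qed simp

lemma norm_linear_part_le:
  assumes w: "w \<in> Vplus" and n: "n \<ge> 1"
  shows "norm (a n * coord w 1) \<le> norm (coord w CARD('n)) ^ d / 8"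
proof -
  let ?t = "norm (coord w CARD('n))"
  have t1: "1 \<le> ?t" using Vplus_last_ge_8[OF w] by linarith
  have "norm (a n * coord w 1) \<le> Mt * ?t"
    using Vplus_coord_le[OF w, of 1] card_ge_3 norm_a_less[OF n] Mt_pos
    by (simp add: norm_mult) (intro mult_mono, auto)
  also have "8 * Mt \<le> ?t ^ (d - 1)"
    using R_ge(1) Vplus_last_gt[OF w] le_power_d_minus_1[OF t1] by linarith
  then have "Mt * ?t \<le> ?t ^ d / 8"
    using t1 mult_right_mono[of "8 * Mt" "?t ^ (d - 1)" ?t] by (simp add: power_d_eq[of ?t])
  finally show ?thesis .
qed

lemma norm_poly_part_le:
  assumes w: "w \<in> Vplus" and n: "n \<ge> 1"
  shows "norm (poly_p dt (\<alpha> n) w) \<le> norm (coord w CARD('n)) ^ d / 8"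
proof -
  let ?t = "norm (coord w CARD('n))"
  have t1: "1 \<le> ?t" using Vplus_last_ge_8[OF w] by linarith
  have "\<And>j. j \<in> {2..CARD('n)} \<Longrightarrow> norm (coord w j) \<le> ?t"
    using Vplus_coord_le[OF w] by auto
  from norm_poly_p_le[OF less_imp_le[OF norm_\<alpha>_less[OF n]] t1 this]
  have "norm (poly_p dt (\<alpha> n) w) \<le> Cpoly * ?t ^ dt"
    unfolding Cpoly_def by simp
  also have "8 * Cpoly \<le> ?t ^ (d - dt)"
    using R_ge(2) Vplus_last_gt[OF w] self_le_power[OF t1, of "d - dt"] degree_gap by linarith
  then have "Cpoly * ?t ^ dt \<le> ?t ^ d / 8"
    using mult_right_mono[of "8 * Cpoly" "?t ^ (d - dt)" "?t ^ dt"] degree_gap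
    by (simp add: power_add[symmetric])
  finally show ?thesis .
qed

lemma norm_power_sum_le:
  assumes w: "w \<in> Vplus"
  shows "norm (\<Sum>i=2..CARD('n) - 1. coord w i ^ d) \<le> norm (coord w CARD('n)) ^ d / 8"
proof -
  let ?t = "norm (coord w CARD('n))"
  have "norm (coord w i ^ d) \<le> (eps * ?t) ^ d" if "i \<in> {2..CARD('n) - 1}" for i
    unfolding norm_power using that card_ge_3
    by (intro power_mono less_imp_le[OF Vplus_coord_less[OF w]]) auto
  then have "norm (\<Sum>i=2..CARD('n) - 1. coord w i ^ d) \<le> (\<Sum>i=2..CARD('n) - 1. (eps * ?t) ^ d)"
    by (intro order_trans[OF norm_sum] sum_mono)
  also have "\<dots> \<le> real CARD('n) * (eps * ?t) ^ d"
    using eps_pos by (simp add: mult_right_mono)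
  also have "\<dots> = (real CARD('n) * eps) * eps ^ (d - 1) * ?t ^ d"
    by (simp add: power_mult_distrib power_d_eq[of eps])
  also have "\<dots> \<le> 1/2 * (1/2)^2 * ?t ^ d"
  proof -
    have "eps ^ (d - 1) \<le> eps ^ 2" using eps_pos eps_le_half d_ge_3 by (intro power_decreasing) auto
    also have "\<dots> \<le> (1/2)^2" using eps_pos eps_le_half by (intro power_mono) auto
    finally show ?thesis unfolding card_mult_eps by (intro mult_right_mono) auto
  qed
  finally show ?thesis by (simp add: power2_eq_square)
qed

lemma norm_rel_err_le:
  assumes w: "w \<in> Vplus" and n: "n \<ge> 1"
  shows "norm (rel_err n w) \<le> 3/8"
proof -
  let ?t = "norm (coord w CARD('n))"
  have "norm (a n * coord w 1 + poly_p dt (\<alpha> n) w + (\<Sum>i=2..CARD('n) - 1. coord w i ^ d)) \<le> 3/8 * ?t ^ d"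
    using norm_linear_part_le[OF w n] norm_poly_part_le[OF w n] norm_power_sum_le[OF w]
      norm_triangle_ineq[of "a n * coord w 1 + poly_p dt (\<alpha> n) w" "\<Sum>i=2..CARD('n) - 1. coord w i ^ d"]
      norm_triangle_ineq[of "a n * coord w 1" "poly_p dt (\<alpha> n) w"]
    by linarith
  moreover have "?t ^ d > 0" using Vplus_last_ge_8[OF w] by (intro zero_less_power) linarith
  ultimately show ?thesis unfolding rel_err_def by (simp add: norm_divide norm_power divide_le_eq)
qed

lemma norm_one_plus_rel_err_ge:
  assumes "w \<in> Vplus" "n \<ge> 1"
  shows "5/8 \<le> norm (1 + rel_err n w)"
  using norm_rel_err_le[OF assms] norm_triangle_ineq4[of "1 + rel_err n w" "rel_err n w"] by simp

lemma norm_last_coord_S_ge: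
  assumes w: "w \<in> Vplus" and n: "n \<ge> 1"
  shows "norm (coord w CARD('n)) ^ d / 2 \<le> norm (coord (S n w) CARD('n))"
proof -
  have "coord w CARD('n) \<noteq> 0" using Vplus_last_ge_8[OF w] by auto
  then have "norm (coord (S n w) CARD('n)) = norm (coord w CARD('n)) ^ d * norm (1 + rel_err n w)"
    by (simp add: coord_S_last_eq norm_mult norm_power)
  then show ?thesis
    using norm_one_plus_rel_err_ge[OF w n] mult_left_mono[of "1/2" "norm (1 + rel_err n w)" "norm (coord w CARD('n)) ^ d"]
    by simp
qed

lemma norm_coord_S_le:
  assumes w: "w \<in> Vplus" and j: "j \<in> {1..<CARD('n)}"
  shows "norm (coord (S n w) j) \<le> 2 * norm (coord w CARD('n)) ^ (d - 1)"
proof -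
  let ?t = "norm (coord w CARD('n))"
  have t1: "1 \<le> ?t" using Vplus_last_ge_8[OF w] by linarith
  show ?thesis
  proof (cases "j = CARD('n) - 1")
    case True
    have "norm (coord w 2) ^ (d - 1) \<le> ?t ^ (d - 1)"
      using Vplus_coord_le[OF w, of 2] card_ge_3 by (intro power_mono) auto
    then show ?thesis
      using True coord_S_penultimate le_power_d_minus_1[OF t1]
        norm_triangle_ineq[of "coord w CARD('n)" "coord w 2 ^ (d - 1)"] by (simp add: norm_power)
  next
    case False
    then have "j \<in> {1..CARD('n) - 2}" "j + 1 \<in> {1..CARD('n)}" using j by auto
    then show ?thesis
      using coord_S_shift Vplus_coord_le[OF w] le_power_d_minus_1[OF t1] t1 by fastforce
  qed
qed

lemma norm_last_coord_S_ge_double: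
  assumes w: "w \<in> Vplus" and n: "n \<ge> 1"
  shows "2 * norm (coord w CARD('n)) \<le> norm (coord (S n w) CARD('n))"
proof -
  let ?t = "norm (coord w CARD('n))"
  have "8 \<le> ?t ^ (d - 1)"
    using Vplus_last_ge_8[OF w] le_power_d_minus_1[of ?t] by linarith
  then have "8 * ?t \<le> ?t ^ (d - 1) * ?t"
    by (intro mult_right_mono) auto
  then show ?thesis
    using norm_last_coord_S_ge[OF w n] power_d_eq[of ?t] Vplus_last_ge_8[OF w] by linarith
qed

lemma norm_coord_S_le_ratio:
  assumes w: "w \<in> Vplus" and n: "n \<ge> 1" and j: "j \<in> {1..<CARD('n)}"
  shows "norm (coord (S n w) j) \<le> 4 / norm (coord w CARD('n)) * norm (coord (S n w) CARD('n))"
proof -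
  let ?t = "norm (coord w CARD('n))"
  have t: "?t > 0" using Vplus_last_ge_8[OF w] by linarith
  have "2 * ?t ^ (d - 1) = 4 / ?t * (?t ^ d / 2)"
    using t by (simp add: power_d_eq[of ?t] field_simps)
  also have "\<dots> \<le> 4 / ?t * norm (coord (S n w) CARD('n))"
    using norm_last_coord_S_ge[OF w n] t by (intro mult_left_mono) auto
  finally show ?thesis using norm_coord_S_le[OF w j, of n] by linarith
qed

lemma S_Vplus:
  assumes w: "w \<in> Vplus" and n: "n \<ge> 1"
  shows "S n w \<in> Vplus"
proof -
  let ?t = "norm (coord w CARD('n))" and ?s = "norm (coord (S n w) CARD('n))"
  have "R < ?s"
    using norm_last_coord_S_ge_double[OF w n] Vplus_last_gt[OF w] R_pos by linarith
  moreover have "norm (coord (S n w) j) < eps * ?s" if j: "j \<in> {1..<CARD('n)}" for j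
  proof -
    have "4 * (2 * real CARD('n)) < ?t" using R_ge(3) Vplus_last_gt[OF w] by linarith
    then have "4 < eps * ?t"
      unfolding eps_def using card_ge_3 by (simp add: field_simps)
    then have "4 / ?t < eps"
      using Vplus_last_ge_8[OF w] eps_pos by (simp add: divide_less_eq mult.commute)
    moreover have "?s > 0" using norm_last_coord_S_ge_double[OF w n] Vplus_last_ge_8[OF w] by linarith
    ultimately show ?thesis
      using norm_coord_S_le_ratio[OF w n j] mult_strict_right_mono[of "4 / ?t" eps ?s] by linarith
  qed
  ultimately show ?thesis unfolding Vplus_def by blast
qed

section \<open>The escaping set\<close>

definition Wplus :: "nat \<Rightarrow> (complex^'n) set" where
  "Wplus N = {y. Scomp S N y \<in> Vplus}"

lemma holo_coord_S:
  assumes "open U" and "\<And>j. holo U (\<lambda>y. coord (g y) j)"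
  shows "holo U (\<lambda>y. coord (S n (g y)) j)"
  unfolding S_eq pert_shift_def coord_mkvec_pos_idx poly_p_def
  by (intro holo_If holo_add holo_mult holo_power holo_sum holo_prod holo_const assms)

lemma holo_coord_Scomp: "holo UNIV (\<lambda>y. coord (Scomp S n y) j)"
proof (induction n arbitrary: j)
  case 0
  then show ?case by (simp add: holo_coord)
next
  case (Suc n)
  then show ?case using holo_coord_S[of UNIV "Scomp S n"] by simp
qed

lemma continuous_on_coord_Scomp: "continuous_on A (\<lambda>y. coord (Scomp S n y) j)"
  using holo_continuous_on[OF holo_coord_Scomp] continuous_on_subset by blast

lemma open_Wplus: "open (Wplus N)"
proof -
  have "Wplus N = {y. R < norm (coord (Scomp S N y) CARD('n))} \<inter>
      (\<Inter>j\<in>{1..<CARD('n)}. {y. norm (coord (Scomp S N y) j) < eps * norm (coord (Scomp S N y) CARD('n))})"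
    unfolding Wplus_def Vplus_def by auto
  also have "open \<dots>"
    by (intro open_Int open_INT open_Collect_less continuous_intros continuous_on_coord_Scomp ballI) auto
  finally show ?thesis .
qed

lemma Scomp_Vplus: "Scomp S N y \<in> Vplus \<Longrightarrow> Scomp S (N + m) y \<in> Vplus"
  by (induction m) (simp_all add: S_Vplus)

lemma Wplus_mono: "N \<le> M \<Longrightarrow> Wplus N \<subseteq> Wplus M"
  unfolding Wplus_def using Scomp_Vplus by (metis (mono_tags, lifting) Collect_mono le_add_diff_inverse)

lemma norm_last_coord_Scomp_ge:
  assumes "Scomp S N y \<in> Vplus"
  shows "2 ^ m * R \<le> norm (coord (Scomp S (N + m) y) CARD('n))"
proof (induction m)
  case 0
  then show ?case using Vplus_last_gt[OF assms] by simp
next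
  case (Suc m)
  then show ?case
    using norm_last_coord_S_ge_double[OF Scomp_Vplus[OF assms, of m], of "Suc (N + m)"] by simp
qed

lemma Vplus_imp_Uplus:
  assumes y: "Scomp S N y \<in> Vplus"
  shows "y \<in> Uplus S"
proof -
  define z where "z n = coord (Scomp S n y) CARD('n)" for n
  have z_ge: "2 ^ m * R \<le> norm (z (m + N))" for m
    unfolding z_def using norm_last_coord_Scomp_ge[OF y, of m] by (simp add: add.commute)
  have z_pos: "norm (z (m + N)) > 0" for m
  proof -
    have "0 < (2::real) ^ m * R" using R_pos by simp
    then show ?thesis using z_ge[of m] by linarith
  qed
  have "eventually (\<lambda>n. z n \<noteq> 0) sequentially"
    unfolding eventually_sequentially using z_pos by (metis le_add_diff_inverse2 norm_zero less_irrefl)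
  moreover have "((\<lambda>n. 1 / z n) \<longlongrightarrow> 0) sequentially"
  proof (rule LIMSEQ_offset[of _ N], rule Lim_null_comparison)
    show "\<forall>\<^sub>F m in sequentially. norm (1 / z (m + N)) \<le> 1 / R * (1/2) ^ m"
      using z_ge z_pos R_pos by (auto simp: norm_divide power_one_over field_simps)
  qed (intro tendsto_mult_right_zero LIMSEQ_power_zero; simp)
  moreover have "((\<lambda>n. coord (Scomp S n y) j / z n) \<longlongrightarrow> 0) sequentially" if j: "j \<in> {1..<CARD('n)}" for j
  proof (rule LIMSEQ_offset[of _ "Suc N"], rule Lim_null_comparison)
    have "norm (coord (Scomp S (m + Suc N) y) j / z (m + Suc N)) \<le> 4 / R * (1/2) ^ m" for m
    proof -
      let ?w = "Scomp S (N + m) y"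
      have w: "?w \<in> Vplus" by (rule Scomp_Vplus[OF y])
      have "Scomp S (m + Suc N) y = S (Suc (N + m)) ?w" by (simp add: add.commute)
      then have "norm (coord (Scomp S (m + Suc N) y) j) \<le> 4 / norm (z (m + N)) * norm (z (m + Suc N))"
        using norm_coord_S_le_ratio[OF w _ j, of "Suc (N + m)"] by (simp add: z_def add.commute)
      also have "\<dots> \<le> 4 / (2 ^ m * R) * norm (z (m + Suc N))"
        using z_ge[of m] z_pos[of m] R_pos by (intro mult_right_mono divide_left_mono) auto
      finally have "norm (coord (Scomp S (m + Suc N) y) j / z (m + Suc N)) \<le> 4 / (2 ^ m * R)"
        using z_pos[of "Suc m"] by (simp add: norm_divide divide_le_eq)
      also have "4 / (2 ^ m * R) = 4 / R * (1/2) ^ m"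
        by (simp add: power_one_over)
      finally show ?thesis .
    qed
    then show "\<forall>\<^sub>F m in sequentially. norm (coord (Scomp S (m + Suc N) y) j / z (m + Suc N)) \<le> 4 / R * (1/2) ^ m"
      by simp
  qed (intro tendsto_mult_right_zero LIMSEQ_power_zero; simp)
  ultimately show ?thesis unfolding Uplus_def z_def by blast
qed

lemma Uplus_imp_Vplus:
  assumes y: "y \<in> Uplus S"
  obtains N where "Scomp S N y \<in> Vplus"
proof -
  define z where "z n = coord (Scomp S n y) CARD('n)" for n
  have "eventually (\<lambda>n. z n \<noteq> 0) sequentially"
    using y unfolding Uplus_def z_def by blast
  moreover have "eventually (\<lambda>n. \<forall>j\<in>{1..<CARD('n)}. norm (coord (Scomp S n y) j / z n) < eps) sequentially"
  proof (rule eventually_ball_finite[OF finite_atLeastLessThan], rule ballI)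
    fix j assume "j \<in> {1..<CARD('n)}"
    with y have "((\<lambda>n. coord (Scomp S n y) j / z n) \<longlongrightarrow> 0) sequentially"
      unfolding Uplus_def z_def by blast
    from tendstoD[OF this eps_pos]
    show "eventually (\<lambda>n. norm (coord (Scomp S n y) j / z n) < eps) sequentially"
      by (simp add: dist_norm)
  qed
  moreover have "((\<lambda>n. 1 / z n) \<longlongrightarrow> 0) sequentially"
    using y unfolding Uplus_def z_def by blast
  from tendstoD[OF this, of "1 / R"] R_pos
  have "eventually (\<lambda>n. norm (1 / z n) < 1 / R) sequentially"
    by (simp add: dist_norm)
  ultimately obtain N where N: "z N \<noteq> 0" "norm (1 / z N) < 1 / R"
      "\<forall>j\<in>{1..<CARD('n)}. norm (coord (Scomp S N y) j / z N) < eps"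
    using eventually_happens'[OF sequentially_bot eventually_conj[OF _ eventually_conj]] by blast
  then have "R < norm (z N)"
    using R_pos by (simp add: norm_divide divide_less_eq field_simps)
  moreover have "norm (coord (Scomp S N y) j) < eps * norm (z N)" if "j \<in> {1..<CARD('n)}" for j
    using N(1,3) that by (simp add: norm_divide divide_less_eq)
  ultimately show ?thesis
    using that unfolding Vplus_def z_def by blast
qed

lemma Uplus_eq_UN_Wplus: "Uplus S = (\<Union>N. Wplus N)"
  unfolding Wplus_def using Vplus_imp_Uplus Uplus_imp_Vplus by blast

lemma open_Uplus: "open (Uplus S)"
  unfolding Uplus_eq_UN_Wplus by (intro open_UN ballI open_Wplus)

section \<open>The Green function\<close>

definition green_seq :: "nat \<Rightarrow> complex^'n \<Rightarrow> real" where
  "green_seq n y = log_plus (supnorm (Scomp S n y)) / real d ^ n"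

definition green :: "complex^'n \<Rightarrow> real" where
  "green y = lim (\<lambda>n. green_seq n y)"

definition log_last :: "nat \<Rightarrow> complex^'n \<Rightarrow> real" where
  "log_last n y = ln (norm (coord (Scomp S n y) CARD('n))) / real d ^ n"

text \<open>The real part of \<open>log_term m\<close> is the increment \<open>log_last (Suc m) - log_last m\<close>; the
  principal logarithm is holomorphic here because \<open>rel_err\<close> stays in the disc of radius \<open>3/8\<close>.\<close>
definition log_term :: "nat \<Rightarrow> complex^'n \<Rightarrow> complex" where
  "log_term m y = Ln (1 + rel_err (Suc m) (Scomp S m y)) * of_real (1 / real d ^ Suc m)"

lemma green_seq_eq_log_last:
  assumes "Scomp S n y \<in> Vplus"
  shows "green_seq n y = log_last n y"
proof -
  have "supnorm (Scomp S n y) = norm (coord (Scomp S n y) CARD('n))"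
    using Vplus_coord_le[OF assms] by (intro supnorm_eq_last_coord) auto
  moreover have "0 < ln (norm (coord (Scomp S n y) CARD('n)))"
    using Vplus_last_ge_8[OF assms] by (intro ln_gt_zero) linarith
  ultimately show ?thesis unfolding green_seq_def log_last_def log_plus_def by simp
qed

lemma norm_log_term_le:
  assumes "Scomp S m y \<in> Vplus"
  shows "norm (log_term m y) \<le> (1/2) ^ Suc m"
proof -
  let ?E = "rel_err (Suc m) (Scomp S m y)"
  have E: "norm ?E \<le> 3/8" by (rule norm_rel_err_le[OF assms]) simp
  then have "norm (Ln (1 + ?E)) \<le> 2 * norm ?E" by (intro norm_Ln_le) simp
  then have Ln_le: "norm (Ln (1 + ?E)) \<le> 1" using E by linarith
  have "(2::real) ^ Suc m \<le> real d ^ Suc m" using d_ge_3 by (intro power_mono) auto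
  then have d_le: "1 / real d ^ Suc m \<le> (1/2) ^ Suc m"
    unfolding power_one_over by (intro frac_le) auto
  have "norm (log_term m y) = norm (Ln (1 + ?E)) * (1 / real d ^ Suc m)"
    unfolding log_term_def norm_mult norm_of_real by simp
  also have "\<dots> \<le> 1 * (1/2) ^ Suc m"
    by (rule mult_mono[OF Ln_le d_le]) auto
  finally show ?thesis by simp
qed

lemma Re_log_term:
  assumes "Scomp S m y \<in> Vplus"
  shows "Re (log_term m y) = ln (norm (1 + rel_err (Suc m) (Scomp S m y))) / real d ^ Suc m"
proof -
  have "1 + rel_err (Suc m) (Scomp S m y) \<noteq> 0"
    using norm_one_plus_rel_err_ge[OF assms, of "Suc m"] by auto
  then show ?thesis unfolding log_term_def by simp
qed

lemma log_last_Suc: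
  assumes w: "Scomp S m y \<in> Vplus"
  shows "log_last (Suc m) y = log_last m y + Re (log_term m y)"
proof -
  let ?w = "Scomp S m y"
  have "coord ?w CARD('n) \<noteq> 0" using Vplus_last_ge_8[OF w] by auto
  moreover have "1 + rel_err (Suc m) ?w \<noteq> 0" using norm_one_plus_rel_err_ge[OF w, of "Suc m"] by auto
  ultimately have "ln (norm (coord (Scomp S (Suc m) y) CARD('n)))
      = real d * ln (norm (coord ?w CARD('n))) + ln (norm (1 + rel_err (Suc m) ?w))"
    by (simp add: coord_S_last_eq norm_mult norm_power ln_mult ln_realpow)
  then show ?thesis
    unfolding log_last_def Re_log_term[OF w] using d_ge_3 by (simp add: field_simps)
qed

lemma log_last_add:
  assumes "Scomp S N y \<in> Vplus"
  shows "log_last (N + n) y = log_last N y + (\<Sum>i<n. Re (log_term (N + i) y))"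
  by (induction n) (simp_all add: log_last_Suc Scomp_Vplus[OF assms])

lemma holo_log_term: "holo (Wplus m) (log_term m)"
proof -
  have coords: "holo (Wplus m) (\<lambda>y. coord (Scomp S m y) j)" for j
    by (rule holo_subset[OF holo_coord_Scomp open_Wplus]) simp
  have "coord (Scomp S m y) CARD('n) ^ d \<noteq> 0" if "y \<in> Wplus m" for y
    using Vplus_last_ge_8[of "Scomp S m y"] that by (auto simp: Wplus_def)
  then have "holo (Wplus m) (\<lambda>y. rel_err (Suc m) (Scomp S m y))"
    unfolding rel_err_def divide_inverse poly_p_def
    by (intro holo_mult holo_add holo_power holo_sum holo_prod holo_const holo_inverse open_Wplus coords)
  moreover have "dist 1 (1 + rel_err (Suc m) (Scomp S m y)) < 1" if "y \<in> Wplus m" for y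
    using norm_rel_err_le[of "Scomp S m y" "Suc m"] that by (simp add: Wplus_def dist_norm)
  ultimately show ?thesis unfolding log_term_def
    by (intro holo_mult holo_const open_Wplus holo_Ln holo_add)
qed

lemma norm_log_term_shift_le:
  assumes "y \<in> Wplus N"
  shows "norm (log_term (N + i) y) \<le> (1/2) ^ Suc i"
proof -
  have "norm (log_term (N + i) y) \<le> (1/2) ^ Suc (N + i)"
    using assms by (intro norm_log_term_le Scomp_Vplus) (simp add: Wplus_def)
  also have "\<dots> \<le> (1/2) ^ Suc i" by (intro power_decreasing) auto
  finally show ?thesis .
qed

lemma uniform_limit_log_term_series:
  "uniform_limit (Wplus N) (\<lambda>n y. \<Sum>i<n. log_term (N + i) y) (\<lambda>y. \<Sum>i. log_term (N + i) y) sequentially"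
  by (rule Weierstrass_m_test[OF norm_log_term_shift_le sums_summable[OF power_half_series]])

lemma holo_log_term_series: "holo (Wplus N) (\<lambda>y. \<Sum>i. log_term (N + i) y)"
proof (rule holo_uniform_limit[OF open_Wplus _ uniform_limit_log_term_series])
  fix n
  show "holo (Wplus N) (\<lambda>y. \<Sum>i<n. log_term (N + i) y)"
    by (intro holo_sum open_Wplus holo_subset[OF holo_log_term open_Wplus] Wplus_mono) simp
qed

lemma uniform_limit_green_seq:
  "uniform_limit (Wplus N) green_seq (\<lambda>y. log_last N y + Re (\<Sum>i. log_term (N + i) y)) sequentially"
proof -
  have "uniform_limit (Wplus N) (\<lambda>n y. log_last N y + Re (\<Sum>i<n. log_term (N + i) y))
      (\<lambda>y. log_last N y + Re (\<Sum>i. log_term (N + i) y)) sequentially"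
    by (intro uniform_limit_intros uniform_limit_log_term_series)
  moreover have "log_last N y + Re (\<Sum>i<n. log_term (N + i) y) = green_seq (n + N) y"
    if "y \<in> Wplus N" for n y
    using that green_seq_eq_log_last[OF Scomp_Vplus, of N y n] log_last_add[of N y n]
    by (simp add: Wplus_def add.commute)
  ultimately have "uniform_limit (Wplus N) (\<lambda>n. green_seq (n + N))
      (\<lambda>y. log_last N y + Re (\<Sum>i. log_term (N + i) y)) sequentially"
    by (rule uniform_limit_cong'[THEN iffD1, rotated 2]) auto
  then show ?thesis
    by (rule uniform_limit_sequentially_offset[THEN iffD1])
qed

lemma green_eq:
  assumes "y \<in> Wplus N"
  shows "green y = log_last N y + Re (\<Sum>i. log_term (N + i) y)"
  unfolding green_def using tendsto_uniform_limitI[OF uniform_limit_green_seq assms] by (rule limI)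

lemma uniform_limit_green_Wplus: "uniform_limit (Wplus N) green_seq green sequentially"
  using uniform_limit_green_seq by (rule uniform_limit_cong'[THEN iffD1, rotated 2]) (auto simp: green_eq)

lemma abs_green_minus_log_last_le:
  assumes "y \<in> Wplus N"
  shows "\<bar>green y - log_last N y\<bar> \<le> 1"
proof -
  have summable: "summable (\<lambda>i. norm (log_term (N + i) y))"
    by (rule summable_comparison_test'[OF sums_summable[OF power_half_series]])
       (use norm_log_term_shift_le[OF assms] in auto)
  have "\<bar>Re (\<Sum>i. log_term (N + i) y)\<bar> \<le> norm (\<Sum>i. log_term (N + i) y)"
    by (rule abs_Re_le_cmod)
  also have "\<dots> \<le> (\<Sum>i. norm (log_term (N + i) y))"
    by (rule summable_norm[OF summable])
  also have "\<dots> \<le> (\<Sum>i. (1/2::real) ^ Suc i)"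
    by (rule suminf_le[OF _ summable sums_summable[OF power_half_series]])
       (use norm_log_term_shift_le[OF assms] in auto)
  also have "\<dots> = 1"
    using power_half_series by (rule sums_unique[symmetric])
  finally show ?thesis using green_eq[OF assms] by simp
qed

text \<open>Near \<open>x\<close>, \<open>log_last N\<close> is \<open>d\<^sup>-\<^sup>N\<close> times the real part of a branch of the logarithm of the last
  coordinate of \<open>S(N)\<close>, normalised at \<open>x\<close>.\<close>
lemma green_locally_Re_holo:
  assumes x: "x \<in> Wplus N"
  shows "\<exists>V F c. open V \<and> x \<in> V \<and> holo V F \<and> (\<forall>y\<in>V. green y = Re (F y) + c)"
proof -
  define z where "z y = coord (Scomp S N y) CARD('n)" for y
  define V where "V = Wplus N \<inter> {y. dist 1 (z y / z x) < 1}"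
  have zx: "z x \<noteq> 0" using x Vplus_last_ge_8 by (force simp: Wplus_def z_def)
  have zy: "z y \<noteq> 0" if "y \<in> V" for y
    using that by (auto simp: V_def)
  have V: "open V"
    unfolding V_def z_def using zx
    by (intro open_Int open_Wplus open_Collect_less continuous_intros continuous_on_coord_Scomp)
       (auto simp: z_def)
  have "x \<in> V" using x zx by (simp add: V_def)
  define F where "F y = Ln (z y / z x) * of_real (1 / real d ^ N) + (\<Sum>i. log_term (N + i) y)" for y
  have "holo V (\<lambda>y. z y / z x)"
    unfolding z_def divide_inverse by (intro holo_mult holo_const holo_subset[OF holo_coord_Scomp] V) simp
  then have "holo V F"
    unfolding F_def
    by (intro holo_add holo_mult holo_const V holo_Ln holo_subset[OF holo_log_term_series V])
       (auto simp: V_def)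
  moreover have "green y = Re (F y) + ln (norm (z x)) / real d ^ N" if "y \<in> V" for y
  proof -
    have "Re (Ln (z y / z x)) = ln (norm (z y)) - ln (norm (z x))"
      using zy[OF that] zx by (simp add: norm_divide ln_div)
    then show ?thesis
      using green_eq[of y N] that unfolding F_def log_last_def z_def V_def by (simp add: diff_divide_distrib)
  qed
  ultimately show ?thesis
    using V \<open>x \<in> V\<close> by (intro exI[of _ V] exI[of _ F] exI[of _ "ln (norm (z x)) / real d ^ N"]) auto
qed

lemma pluriharmonic_green: "pluriharmonic (Uplus S) green"
proof (rule pluriharmonic_if_locally_Re_holo[OF open_Uplus])
  fix x assume "x \<in> Uplus S"
  then obtain N where "x \<in> Wplus N" by (auto simp: Uplus_eq_UN_Wplus)
  then show "\<exists>V F c. open V \<and> x \<in> V \<and> holo V F \<and> (\<forall>y\<in>V. green y = Re (F y) + c)"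
    by (rule green_locally_Re_holo)
qed

lemma uniform_limit_green_seq_compact:
  assumes "K \<subseteq> Uplus S" "compact K"
  shows "uniform_limit K green_seq green sequentially"
proof -
  have "K \<subseteq> (\<Union>N\<in>UNIV. Wplus N)" using assms(1) by (simp add: Uplus_eq_UN_Wplus)
  then obtain C where C: "finite C" "K \<subseteq> (\<Union>N\<in>C. Wplus N)"
    by (rule compactE_image[OF assms(2) open_Wplus])
  have "Wplus N \<subseteq> Wplus (Max (insert 0 C))" if "N \<in> C" for N
    using that C(1) by (intro Wplus_mono) simp
  then have "K \<subseteq> Wplus (Max (insert 0 C))" using C(2) by blast
  then show ?thesis by (rule uniform_limit_on_subset[OF uniform_limit_green_Wplus])
qed

lemma green_nonconstant: "\<exists>x\<in>Uplus S. \<exists>y\<in>Uplus S. green x \<noteq> green y"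
proof -
  define p where "p t = (mkvec (\<lambda>j. if j = CARD('n) then complex_of_real t else 0) :: complex^'n)" for t
  have coord_p: "coord (p t) j = (if j = CARD('n) then complex_of_real t else 0)" if "j \<in> {1..CARD('n)}" for t j
    unfolding p_def using that by (rule coord_mkvec)
  have p_Wplus: "p t \<in> Wplus 0" if "t > R" for t
    using that R_pos eps_pos card_ge_3 by (auto simp: Wplus_def Vplus_def coord_p)
  have green_p: "\<bar>green (p t) - ln t\<bar> \<le> 1" if "t > R" for t
    using abs_green_minus_log_last_le[OF p_Wplus[OF that]] that R_pos card_ge_3
    by (simp add: log_last_def coord_p)
  define t where "t = R + 1"
  have t: "t > R" "t > 0" using R_pos by (simp_all add: t_def)
  have "t \<le> exp 3 * t" using t(2) mult_right_mono[of 1 "exp 3" t] by simp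
  then have t': "exp 3 * t > R" using t(1) by linarith
  have "ln (exp 3 * t) = 3 + ln t" using t(2) by (simp add: ln_mult)
  then have "green (p t) \<noteq> green (p (exp 3 * t))"
    using green_p[OF t(1)] green_p[OF t'] by linarith
  moreover have "p t \<in> Uplus S" "p (exp 3 * t) \<in> Uplus S"
    using p_Wplus[OF t(1)] p_Wplus[OF t'] by (auto simp: Uplus_eq_UN_Wplus)
  ultimately show ?thesis by blast
qed

end

theorem proposition3p7:
  fixes a :: "nat \<Rightarrow> complex" and \<alpha> :: "nat \<Rightarrow> (nat \<Rightarrow> nat) \<Rightarrow> complex"
    and dt d :: nat and mt Mt :: real
    and S :: "nat \<Rightarrow> complex^'n::finite \<Rightarrow> complex^'n"
    and G :: "nat \<Rightarrow> complex^'n \<Rightarrow> real"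
  assumes "CARD('n) \<ge> 3"
    and "weak_shift_like_seq CARD('n) dt a \<alpha> mt Mt"
    and "d \<ge> dt + 2"
    and "\<And>n. S n = pert_shift dt (a n) (\<alpha> n) d"
    and "\<And>n z. G n z = log_plus (supnorm (Scomp S n z)) / real d ^ n"
  shows "\<exists>Gt :: complex^'n \<Rightarrow> real.
           (\<forall>K. K \<subseteq> Uplus S \<and> compact K \<longrightarrow> uniform_limit K G Gt sequentially) \<and>
           continuous_on (Uplus S) Gt \<and>
           (\<exists>x\<in>Uplus S. \<exists>y\<in>Uplus S. Gt x \<noteq> Gt y) \<and>
           pluriharmonic (Uplus S) Gt"
proof -
  interpret perturbed_weak_shift a \<alpha> dt d mt Mt S
    using assms(1-4) by unfold_locales auto
  have G: "G = green_seq"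
    using assms(5) by (intro ext) (simp add: green_seq_def)
  show ?thesis
  proof (intro exI[of _ green] conjI allI impI)
    fix K assume "K \<subseteq> Uplus S \<and> compact K"
    then show "uniform_limit K G green sequentially"
      unfolding G by (intro uniform_limit_green_seq_compact) auto
  qed (use pluriharmonic_green pluriharmonic_imp_continuous_on green_nonconstant in auto)
qed

end
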